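(* Let $a\in\mathbb{R}$, $T>0$ and let $\mathcal{G}_{\mathrm{adv}}$ and $\mu$ be as in the context. There exists a constant $C>0$ such that for any $\epsilon\in(0,\tfrac12]$ there exists a shift-DeepONet $\mathcal{N}^{\mathrm{sDON}}_\epsilon$ (with ReLU networks as components) with $p\le C$ trunk/branch functions and $m\le C\epsilon^{-1}$ (equidistant) sensor points such that \[ \mathbb{E}_{\bar u\sim\mu}\big[\|\mathcal{G}_{\mathrm{adv}}(\bar u)-\mathcal{N}^{\mathrm{sDON}}_\epsilon(\bar u)\|_{L^1(\mathbb{T})}\big]\le\epsilon, \] and \[ \mathrm{width}(\mathcal{N}^{\mathrm{sDON}}_\epsilon)\le C,\quad \mathrm{depth}(\mathcal{N}^{\mathrm{sDON}}_\epsilon)\le C\log(\epsilon^{-1})^2,\quad \mathrm{size}(\mathcal{N}^{\mathrm{sDON}}_\epsilon)\le C\epsilon^{-1}. \]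
   Context: $\mathbb{T}=\mathbb{R}/2\pi\mathbb{Z}$. Fix $0<\underline h\le\overline h$ and $0<\underline w\le\overline w<2\pi$. The input measure $\mu$ is the law of $\bar u(x)=h\,1_{[-w/2,w/2]}(x-\xi)$ (periodized), with independent $h\sim\mathrm{Unif}[\underline h,\overline h]$, $w\sim\mathrm{Unif}[\underline w,\overline w]$, $\xi\sim\mathrm{Unif}[0,2\pi]$. $\mathcal{G}_{\mathrm{adv}}(\bar u)(x)=\bar u(x-aT)$ (solution at time $T$ of $\partial_tu+a\partial_xu=0$). A shift-DeepONet with sensor points $x_1,\dots,x_m$ and $p$ basis functions is an operator $\mathcal{N}^{\mathrm{sDON}}(\bar u)(y)=\sum_{k=1}^p\beta_k(\mathcal{E}(\bar u))\,\tau_k\big(\mathcal{A}_k(\mathcal{E}(\bar u))\,y+\gamma_k(\mathcal{E}(\bar u))\big)$, where $\mathcal{E}(\bar u)=(\bar u(x_1),\dots,\bar u(x_m))$, and the branch net $\boldsymbol\beta:\mathbb{R}^m\to\mathbb{R}^p$, trunk net $\boldsymbol\tau:\mathbb{R}\to\mathbb{R}^p$, scale net $\mathcal{A}=(\mathcal{A}_k):\mathbb{R}^m\to\mathbb{R}^p$ and shift net $\boldsymbol\gamma=(\gamma_k):\mathbb{R}^m\to\mathbb{R}^p$ are neural networks. For a neural network, depth is the number of hidden layers and width the maximal number of neurons in a hidden layer. For a shift-DeepONet, $\mathrm{width}=\mathrm{width}(\boldsymbol\beta)+\mathrm{width}(\boldsymbol\tau)+\mathrm{width}(\mathcal{A})+\mathrm{width}(\boldsymbol\gamma)$,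 $\mathrm{depth}=\max$ of the four depths, and $\mathrm{size}=(m+p)\,\mathrm{width}+\mathrm{width}^2\,\mathrm{depth}$. *)

theory Defs
  imports "HOL-Probability.Probability"
begin

text \<open>A layer is an affine map given by a weight matrix (list of rows) and a bias vector.
  A network is a nonempty list of layers; ReLU is applied after every layer except the last.\<close>

type_synonym layer = "real list list \<times> real list"

definition affine :: "layer \<Rightarrow> real list \<Rightarrow> real list" where
  "affine L x = map2 (\<lambda>row bi. sum_list (map2 (*) row x) + bi) (fst L) (snd L)"

definition relu_vec :: "real list \<Rightarrow> real list" where
  "relu_vec x = map (\<lambda>t. max 0 t) x"

fun nn_eval :: "layer list \<Rightarrow> real list \<Rightarrow> real list" where
  "nn_eval [] x = x"
| "nn_eval [L] x = affine L x"
| "nn_eval (L # L' # Ls) x = nn_eval (L' # Ls) (relu_vec (affine L x))"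

definition nn_wf :: "nat \<Rightarrow> nat \<Rightarrow> layer list \<Rightarrow> bool" where
  "nn_wf din dout Ls \<longleftrightarrow> Ls \<noteq> [] \<and>
     (\<exists>ds. length ds = Suc (length Ls) \<and> ds ! 0 = din \<and> ds ! length Ls = dout \<and>
        (\<forall>k<length Ls. length (fst (Ls ! k)) = ds ! Suc k \<and> length (snd (Ls ! k)) = ds ! Suc k \<and>
                        (\<forall>r\<in>set (fst (Ls ! k)). length r = ds ! k)))"

definition nn_depth :: "layer list \<Rightarrow> nat" where
  "nn_depth Ls = length Ls - 1"

definition nn_width :: "layer list \<Rightarrow> nat" where
  "nn_width Ls = foldr max (map (\<lambda>L. length (snd L)) (butlast Ls)) 0"

text \<open>Sensor points xs (m = length xs), branch net B, trunk net Tr, scale net A, shift net G.\<close>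
definition sdon_eval ::
  "real list \<Rightarrow> nat \<Rightarrow> layer list \<Rightarrow> layer list \<Rightarrow> layer list \<Rightarrow> layer list
     \<Rightarrow> (real \<Rightarrow> real) \<Rightarrow> real \<Rightarrow> real" where
  "sdon_eval xs p B Tr A G u y =
     (let e = map u xs in
      \<Sum>k<p. nn_eval B e ! k *
              nn_eval Tr [nn_eval A e ! k * y + nn_eval G e ! k] ! k)"

definition sdon_wf :: "nat \<Rightarrow> nat \<Rightarrow> layer list \<Rightarrow> layer list \<Rightarrow> layer list \<Rightarrow> layer list \<Rightarrow> bool" where
  "sdon_wf m p B Tr A G \<longleftrightarrow> nn_wf m p B \<and> nn_wf 1 p Tr \<and> nn_wf m p A \<and> nn_wf m p G"

definition sdon_width :: "layer list \<Rightarrow> layer list \<Rightarrow> layer list \<Rightarrow> layer list \<Rightarrow> nat" where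
  "sdon_width B Tr A G = nn_width B + nn_width Tr + nn_width A + nn_width G"

definition sdon_depth :: "layer list \<Rightarrow> layer list \<Rightarrow> layer list \<Rightarrow> layer list \<Rightarrow> nat" where
  "sdon_depth B Tr A G = max (max (nn_depth B) (nn_depth Tr)) (max (nn_depth A) (nn_depth G))"

definition sdon_size :: "nat \<Rightarrow> nat \<Rightarrow> layer list \<Rightarrow> layer list \<Rightarrow> layer list \<Rightarrow> layer list \<Rightarrow> nat" where
  "sdon_size m p B Tr A G =
     (m + p) * sdon_width B Tr A G + (sdon_width B Tr A G)^2 * sdon_depth B Tr A G"

text \<open>Periodized step: h * 1_{[-w/2,w/2]}(x - xi) on the torus R/2piZ.\<close>
definition bump :: "real \<Rightarrow> real \<Rightarrow> real \<Rightarrow> real \<Rightarrow> real" where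
  "bump h w xi x = (if \<exists>k::int. \<bar>x - xi - 2 * pi * of_int k\<bar> \<le> w / 2 then h else 0)"

definition G_adv :: "real \<Rightarrow> real \<Rightarrow> (real \<Rightarrow> real) \<Rightarrow> (real \<Rightarrow> real)" where
  "G_adv a T u = (\<lambda>x. u (x - a * T))"

text \<open>Uniform law on [lo,hi]; degenerate interval gives the point mass.\<close>
definition unif :: "real \<Rightarrow> real \<Rightarrow> real measure" where
  "unif lo hi = (if lo < hi then uniform_measure lborel {lo..hi} else return lborel lo)"

text \<open>L^1(T) distance (functions on T viewed as 2pi-periodic functions on R).\<close>
definition L1T_dist :: "(real \<Rightarrow> real) \<Rightarrow> (real \<Rightarrow> real) \<Rightarrow> ennreal" where
  "L1T_dist f g = (\<integral>\<^sup>+ y. ennreal \<bar>f y - g y\<bar> * indicator {0..2*pi} y \<partial>lborel)"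

text \<open>Expectation over ubar ~ mu, as an integral over the parameters (h,(w,xi)).\<close>
definition mu_expect :: "real \<Rightarrow> real \<Rightarrow> real \<Rightarrow> real \<Rightarrow> ((real \<Rightarrow> real) \<Rightarrow> ennreal) \<Rightarrow> ennreal" where
  "mu_expect hl hh wl wh F =
     (\<integral>\<^sup>+ q. F (bump (fst q) (fst (snd q)) (snd (snd q)))
        \<partial>(unif hl hh \<Otimes>\<^sub>M (unif wl wh \<Otimes>\<^sub>M unif 0 (2*pi))))"

end

theory Submission
  imports Defs
begin

text \<open>Advection only translates the periodic bump, and with the sensors placed at
  \<open>-a T + 2 \<pi> j / m\<close> the sensor values are the values of the advected bump at the grid points
  \<open>j \<Delta>\<close>, \<open>\<Delta> = 2 \<pi> / m\<close>: they equal \<open>h\<close> on a cyclic arc of about \<open>w / \<Delta>\<close> consecutive sensors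
  and vanish elsewhere. Group the \<open>m = K d\<close> sensors into \<open>K\<close> blocks of \<open>d\<close>; for \<open>K\<close> large in terms
  of \<open>wl\<close> and \<open>2 \<pi> - wh\<close> the arc fills some block and misses another. A ReLU network of depth 4 and
  width \<open>O(K)\<close> then reads off from the block sums the height \<open>h\<close> (the content of the full block
  following the first nonempty one, divided by \<open>d\<close>) and \<open>h\<close> times the position \<open>L\<close> of the first
  sensor on the arc. So the scale and shift nets can output \<open>h\<close> and \<open>h (c\<^sub>k - L \<Delta>)\<close>, and eight
  ReLU trunk functions with branch weights \<open>\<plusminus>1/\<Delta>\<close> combine into \<open>h\<close> times a trapezoidal
  approximation of the periodic indicator of the arc. It agrees with the target outside five
  intervals of length at most \<open>2 \<Delta>\<close>, so the \<open>L\<^sup>1\<close> error is at most \<open>40 \<pi> h / m\<close> for every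
  input, and \<open>d \<approx> 40 \<pi> hh / \<epsilon>\<close> gives the claimed rates with width and depth independent of \<open>\<epsilon>\<close>.\<close>

definition dense_layer :: "nat \<Rightarrow> nat \<Rightarrow> (nat \<Rightarrow> nat \<Rightarrow> real) \<Rightarrow> (nat \<Rightarrow> real) \<Rightarrow> layer" where
  "dense_layer n k W b = (map (\<lambda>i. map (W i) [0..<n]) [0..<k], map b [0..<k])"

lemma sum_list_map2_times_upt:
  "sum_list (map2 (*) (map f [0..<n]) (map g [0..<n])) = (\<Sum>j<n. f j * (g j :: real))"
  by (induction n) simp_all

lemma affine_dense_layer:
  "affine (dense_layer n k W b) (map x [0..<n]) = map (\<lambda>i. (\<Sum>j<n. W i j * x j) + b i) [0..<k]"
  by (rule nth_equalityI) (simp_all add: affine_def dense_layer_def sum_list_map2_times_upt)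

lemma relu_vec_map: "relu_vec (map f [0..<k]) = map (\<lambda>i. max 0 (f i)) [0..<k]"
  by (simp add: relu_vec_def)

lemma relu_affine_dense_layer:
  assumes "\<And>i. i < k \<Longrightarrow> max 0 ((\<Sum>j<n. W i j * x j) + b i) = y i"
  shows "relu_vec (affine (dense_layer n k W b) (map x [0..<n])) = map y [0..<k]"
  unfolding affine_dense_layer relu_vec_map using assms by simp

lemma nn_wf_dense_layer: "nn_wf n k [dense_layer n k W b]"
  unfolding nn_wf_def by (rule conjI, simp, rule exI[of _ "[n, k]"]) (auto simp: dense_layer_def)

lemma nn_wf_Cons_dense_layer:
  assumes "nn_wf k out Ls"
  shows "nn_wf n out (dense_layer n k W b # Ls)"
proof -
  from assms obtain ds where ds: "length ds = Suc (length Ls)" "ds ! 0 = k" "ds ! length Ls = out"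
    "\<forall>i<length Ls. length (fst (Ls ! i)) = ds ! Suc i \<and> length (snd (Ls ! i)) = ds ! Suc i \<and>
        (\<forall>r\<in>set (fst (Ls ! i)). length r = ds ! i)"
    unfolding nn_wf_def by blast
  show ?thesis
    unfolding nn_wf_def
  proof (intro conjI exI[of _ "n # ds"] allI impI)
    fix i assume "i < length (dense_layer n k W b # Ls)"
    with ds show "length (fst ((dense_layer n k W b # Ls) ! i)) = (n # ds) ! Suc i"
      and "length (snd ((dense_layer n k W b # Ls) ! i)) = (n # ds) ! Suc i"
      and "\<forall>r\<in>set (fst ((dense_layer n k W b # Ls) ! i)). length r = (n # ds) ! i"
      by (cases i; auto simp: dense_layer_def)+
  qed (use ds in simp_all)
qed

definition fun_append :: "nat \<Rightarrow> (nat \<Rightarrow> 'a) \<Rightarrow> (nat \<Rightarrow> 'a) \<Rightarrow> nat \<Rightarrow> 'a" where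
  "fun_append K f g j = (if j < K then f j else g (j - K))"

lemma fun_append_less [simp]: "j < K \<Longrightarrow> fun_append K f g j = f j"
  and fun_append_ge [simp]: "K \<le> j \<Longrightarrow> fun_append K f g j = g (j - K)"
  by (simp_all add: fun_append_def)

lemma sum_lessThan_add_nat: "(\<Sum>j<(K::nat) + K'. F j) = (\<Sum>j<K. F j) + (\<Sum>j<K'. F (K + j))"
  by (induction K') (simp_all add: add.assoc)

lemma sum_fun_append_mult:
  "(\<Sum>j<K + K'. fun_append K f g j * fun_append K u v j) = (\<Sum>j<K. f j * u j) + (\<Sum>j<K'. g j * (v j :: real))"
  by (simp add: sum_lessThan_add_nat)

definition unit_vec :: "nat \<Rightarrow> nat \<Rightarrow> real" where
  "unit_vec a j = (if j = a then 1 else 0)"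

lemma sum_unit_vec_mult [simp]: "a < K \<Longrightarrow> (\<Sum>j<K. unit_vec a j * f j) = f a"
  by (simp add: unit_vec_def if_distrib[of "\<lambda>x. x * f _"] cong: if_cong)

lemma sum_scaled_unit_vec_mult [simp]: "a < K \<Longrightarrow> (\<Sum>j<K. (c * unit_vec a j) * f j) = c * f a"
  by (simp add: mult.assoc sum_distrib_left[symmetric])

lemma sum_unit_vec_diff_mult:
  "a < K \<Longrightarrow> b < K \<Longrightarrow> (\<Sum>j<K. (unit_vec a j - unit_vec b j) * f j) = f a - f b"
  by (simp add: left_diff_distrib sum_subtractf)

lemma sum_unit_vec_diff_mult_divide:
  "a < K \<Longrightarrow> b < K \<Longrightarrow> (\<Sum>j<K. (unit_vec a j - unit_vec b j) * f j / c) = (f a - f b) / c"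
  by (simp add: sum_divide_distrib[symmetric] sum_unit_vec_diff_mult)

definition cyc_pred :: "nat \<Rightarrow> nat \<Rightarrow> nat" where
  "cyc_pred K i = (if i = 0 then K - 1 else i - 1)"

lemma cyc_pred_less: "0 < K \<Longrightarrow> i < K \<Longrightarrow> cyc_pred K i < K"
  unfolding cyc_pred_def by auto

definition block_weight :: "nat \<Rightarrow> nat \<Rightarrow> nat \<Rightarrow> real" where
  "block_weight d i j = (if i * d \<le> j \<and> j < i * d + d then 1 else 0)"

definition block_sum :: "nat \<Rightarrow> (nat \<Rightarrow> real) \<Rightarrow> nat \<Rightarrow> real" where
  "block_sum d s i = (\<Sum>j\<in>{i * d..<i * d + d}. s j)"

lemma sum_block_weight_mult:
  assumes "i < K"
  shows "(\<Sum>j<K * d. block_weight d i j * s j) = block_sum d s i"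
proof -
  have "i * d + d \<le> K * d"
    using assms by (metis Suc_leI add.commute mult_Suc mult_le_mono1)
  then have blk: "{..<K * d} \<inter> {i * d..<i * d + d} = {i * d..<i * d + d}"
    by auto
  have "(\<Sum>j<K * d. block_weight d i j * s j) = (\<Sum>j<K * d. if j \<in> {i * d..<i * d + d} then s j else 0)"
    by (rule sum.cong) (auto simp: block_weight_def)
  also have "\<dots> = block_sum d s i"
    by (simp only: sum.inter_restrict[symmetric] finite_lessThan blk block_sum_def)
  finally show ?thesis .
qed

section \<open>The core network\<close>

text \<open>For block sums \<open>C\<close> that are multiples of some \<open>h \<ge> hl\<close> of the occupation numbers of a cyclic
  run of blocks, \<open>C / hl - excess hl C\<close> is the indicator of a nonempty block. Hence \<open>onset\<close> marks
  the first block of the run, \<open>masked\<close> deletes the (full) block after it so that \<open>plateau = h d\<close>, and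
  the first two groups of outputs of \<open>core_out\<close> differ only at the first block.\<close>

definition excess :: "real \<Rightarrow> real \<Rightarrow> real" where
  "excess hl c = max 0 (c / hl - 1)"

definition onset :: "nat \<Rightarrow> real \<Rightarrow> (nat \<Rightarrow> real) \<Rightarrow> nat \<Rightarrow> real" where
  "onset K hl C i = max 0 ((C i - C (cyc_pred K i)) / hl + (excess hl (C (cyc_pred K i)) - excess hl (C i)))"

definition masked :: "nat \<Rightarrow> real \<Rightarrow> real \<Rightarrow> (nat \<Rightarrow> real) \<Rightarrow> nat \<Rightarrow> real" where
  "masked K hl D C i = max 0 (C i - D * onset K hl C (cyc_pred K i))"

definition plateau :: "nat \<Rightarrow> real \<Rightarrow> real \<Rightarrow> (nat \<Rightarrow> real) \<Rightarrow> real" where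
  "plateau K hl D C = (\<Sum>j<K. C j) - (\<Sum>j<K. masked K hl D C j)"

definition core_out :: "nat \<Rightarrow> real \<Rightarrow> real \<Rightarrow> real \<Rightarrow> (nat \<Rightarrow> real) \<Rightarrow> nat \<Rightarrow> real" where
  "core_out K hl D M C =
     fun_append K (\<lambda>i. max 0 (real (i + 1) * plateau K hl D C - C i))
       (fun_append K (\<lambda>i. max 0 (real (i + 1) * plateau K hl D C - C i - M * onset K hl C i))
         (\<lambda>t. if t = 0 then max 0 (plateau K hl D C) else max 0 (\<Sum>j<K. C j)))"

definition core_W1 :: "nat \<Rightarrow> nat \<Rightarrow> real \<Rightarrow> nat \<Rightarrow> nat \<Rightarrow> real" where
  "core_W1 K d hl i j = (if i < K then block_weight d i j else block_weight d (i - K) j / hl)"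

definition core_b1 :: "nat \<Rightarrow> nat \<Rightarrow> real" where
  "core_b1 K i = (if i < K then 0 else -1)"

definition core_W2 :: "nat \<Rightarrow> real \<Rightarrow> nat \<Rightarrow> nat \<Rightarrow> real" where
  "core_W2 K hl i =
     (if i < K then fun_append K (unit_vec i) (\<lambda>_. 0)
      else fun_append K (\<lambda>j. (unit_vec (i - K) j - unit_vec (cyc_pred K (i - K)) j) / hl)
                        (\<lambda>j. unit_vec (cyc_pred K (i - K)) j - unit_vec (i - K) j))"

definition core_W3 :: "nat \<Rightarrow> real \<Rightarrow> nat \<Rightarrow> nat \<Rightarrow> real" where
  "core_W3 K D i =
     (if i < K then fun_append K (unit_vec i) (\<lambda>_. 0)
      else if i < K + K then fun_append K (\<lambda>_. 0) (unit_vec (i - K))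
      else fun_append K (unit_vec (i - K - K)) (\<lambda>j. - D * unit_vec (cyc_pred K (i - K - K)) j))"

definition core_W4 :: "nat \<Rightarrow> real \<Rightarrow> nat \<Rightarrow> nat \<Rightarrow> real" where
  "core_W4 K M i =
     (if i < K then fun_append K (\<lambda>j. real (i + 1) - unit_vec i j)
                      (fun_append K (\<lambda>_. 0) (\<lambda>_. - real (i + 1)))
      else if i < K + K then fun_append K (\<lambda>j. real (i - K + 1) - unit_vec (i - K) j)
                      (fun_append K (\<lambda>j. - M * unit_vec (i - K) j) (\<lambda>_. - real (i - K + 1)))
      else if i = K + K then fun_append K (\<lambda>_. 1) (fun_append K (\<lambda>_. 0) (\<lambda>_. -1))
      else fun_append K (\<lambda>_. 1) (fun_append K (\<lambda>_. 0) (\<lambda>_. 0)))"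

definition core_net :: "nat \<Rightarrow> nat \<Rightarrow> real \<Rightarrow> real \<Rightarrow> real \<Rightarrow> layer list" where
  "core_net K d hl D M =
     [dense_layer (K * d) (K + K) (core_W1 K d hl) (core_b1 K),
      dense_layer (K + K) (K + K) (core_W2 K hl) (\<lambda>_. 0),
      dense_layer (K + K) (K + (K + K)) (core_W3 K D) (\<lambda>_. 0),
      dense_layer (K + (K + K)) (K + (K + 2)) (core_W4 K M) (\<lambda>_. 0)]"

lemma core_layer1:
  assumes "\<And>j. 0 \<le> s j"
  shows "relu_vec (affine (dense_layer (K * d) (K + K) (core_W1 K d hl) (core_b1 K)) (map s [0..<K * d]))
    = map (fun_append K (block_sum d s) (\<lambda>i. excess hl (block_sum d s i))) [0..<K + K]"
proof (rule relu_affine_dense_layer)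
  fix i assume i: "i < K + K"
  have "0 \<le> block_sum d s i" for i
    unfolding block_sum_def by (rule sum_nonneg) (use assms in simp)
  moreover have "(\<Sum>j<K * d. core_W1 K d hl i j * s j) = block_sum d s (i - K) / hl" if "\<not> i < K"
    using that i by (simp add: core_W1_def sum_divide_distrib[symmetric] sum_block_weight_mult)
  ultimately show "max 0 ((\<Sum>j<K * d. core_W1 K d hl i j * s j) + core_b1 K i)
      = fun_append K (block_sum d s) (\<lambda>i. excess hl (block_sum d s i)) i"
    using i by (cases "i < K") (simp_all add: core_W1_def core_b1_def sum_block_weight_mult excess_def)
qed

lemma core_layer2:
  assumes K: "0 < K" and C: "\<And>i. 0 \<le> C i"
  shows "relu_vec (affine (dense_layer (K + K) (K + K) (core_W2 K hl) (\<lambda>_. 0))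
                    (map (fun_append K C (\<lambda>i. excess hl (C i))) [0..<K + K]))
    = map (fun_append K C (onset K hl C)) [0..<K + K]"
proof (rule relu_affine_dense_layer)
  fix i assume i: "i < K + K"
  show "max 0 ((\<Sum>j<K + K. core_W2 K hl i j * fun_append K C (\<lambda>i. excess hl (C i)) j) + 0)
      = fun_append K C (onset K hl C) i"
  proof (cases "i < K")
    case True
    then show ?thesis using C[of i] by (simp add: core_W2_def sum_fun_append_mult)
  next
    case False
    then have "i - K < K" "cyc_pred K (i - K) < K"
      using i cyc_pred_less[OF K] by simp_all
    then show ?thesis using False
      by (simp add: core_W2_def sum_fun_append_mult sum_unit_vec_diff_mult_divide
          sum_unit_vec_diff_mult onset_def)
  qed
qed

lemma core_layer3:
  assumes K: "0 < K" and C: "\<And>i. 0 \<le> C i"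
  shows "relu_vec (affine (dense_layer (K + K) (K + (K + K)) (core_W3 K D) (\<lambda>_. 0))
                    (map (fun_append K C (onset K hl C)) [0..<K + K]))
    = map (fun_append K C (fun_append K (onset K hl C) (masked K hl D C))) [0..<K + (K + K)]"
proof (rule relu_affine_dense_layer)
  fix i assume i: "i < K + (K + K)"
  show "max 0 ((\<Sum>j<K + K. core_W3 K D i j * fun_append K C (onset K hl C) j) + 0)
      = fun_append K C (fun_append K (onset K hl C) (masked K hl D C)) i"
  proof (cases "i < K + K")
    case True
    have "0 \<le> onset K hl C (i - K)"
      by (simp add: onset_def)
    then show ?thesis using True C[of i] by (simp add: core_W3_def sum_fun_append_mult)
  next
    case False
    then have "\<not> i < K" and i': "i - K - K < K" and p: "cyc_pred K (i - K - K) < K"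
      using i cyc_pred_less[OF K] by simp_all
    have "(\<Sum>j<K + K. core_W3 K D i j * fun_append K C (onset K hl C) j)
        = C (i - K - K) + (- D * onset K hl C (cyc_pred K (i - K - K)))"
      using False \<open>\<not> i < K\<close> i' p unfolding core_W3_def
      by (simp only: if_False sum_fun_append_mult sum_unit_vec_mult sum_scaled_unit_vec_mult)
    then show ?thesis using False by (simp add: masked_def)
  qed
qed

lemma core_layer4:
  shows "relu_vec (affine (dense_layer (K + (K + K)) (K + (K + 2)) (core_W4 K M) (\<lambda>_. 0))
                    (map (fun_append K C (fun_append K (onset K hl C) (masked K hl D C))) [0..<K + (K + K)]))
    = map (core_out K hl D M C) [0..<K + (K + 2)]"
proof (rule relu_affine_dense_layer)
  fix i assume i: "i < K + (K + 2)"
  have row: "(\<Sum>j<K. (real (k + 1) - unit_vec k j) * C j) + (\<Sum>j<K. - real (k + 1) * masked K hl D C j)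
      = real (k + 1) * plateau K hl D C - C k" if "k < K" for k
  proof -
    have "(\<Sum>j<K. (real (k + 1) - unit_vec k j) * C j) = real (k + 1) * (\<Sum>j<K. C j) - C k"
      using that by (simp add: left_diff_distrib sum_subtractf sum_distrib_left)
    moreover have "(\<Sum>j<K. - real (k + 1) * masked K hl D C j) = - real (k + 1) * (\<Sum>j<K. masked K hl D C j)"
      by (simp add: sum_distrib_left)
    ultimately show ?thesis
      by (simp add: plateau_def algebra_simps)
  qed
  show "max 0 ((\<Sum>j<K + (K + K). core_W4 K M i j * fun_append K C (fun_append K (onset K hl C) (masked K hl D C)) j) + 0)
      = core_out K hl D M C i"
  proof -
    consider "i < K" | "K \<le> i" "i < K + K" | "i = K + K" | "i = K + K + 1"
      using i by linarith
    then show ?thesis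
    proof cases
      case 1
      then show ?thesis using row[of i] by (simp add: core_W4_def sum_fun_append_mult core_out_def)
    next
      case 2
      then have "\<not> i < K" "i - K < K" by simp_all
      then have eq: "(\<Sum>j<K + (K + K). core_W4 K M i j * fun_append K C (fun_append K (onset K hl C) (masked K hl D C)) j)
          = (real (i - K + 1) * plateau K hl D C - C (i - K)) + (- M * onset K hl C (i - K))"
        using 2 row[of "i - K"] unfolding core_W4_def
        by (simp only: if_False if_True sum_fun_append_mult sum_scaled_unit_vec_mult) simp
      show ?thesis
        unfolding core_out_def using 2 \<open>i - K < K\<close>
        by (simp only: eq add_0_right fun_append_ge fun_append_less diff_diff_eq)
    next
      case 3
      then show ?thesis by (simp add: core_W4_def sum_fun_append_mult core_out_def plateau_def sum_negf)
    next
      case 4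
      then show ?thesis by (simp add: core_W4_def sum_fun_append_mult core_out_def)
    qed
  qed
qed

lemma nn_eval_core_net:
  assumes "0 < K" and "\<And>j. 0 \<le> s j"
  shows "nn_eval (core_net K d hl D M @ [L]) (map s [0..<K * d])
    = affine L (map (core_out K hl D M (block_sum d s)) [0..<K + (K + 2)])"
proof -
  have "0 \<le> block_sum d s i" for i
    unfolding block_sum_def by (rule sum_nonneg) (use assms in simp)
  then show ?thesis
    unfolding core_net_def
    by (simp only: append_Cons append_Nil nn_eval.simps core_layer1[OF assms(2)]
        core_layer2[OF assms(1)] core_layer3[OF assms(1)] core_layer4)
qed

section \<open>Cyclic runs of nonempty blocks\<close>

lemma excess_zero [simp]: "excess hl 0 = 0"
  by (simp add: excess_def)

lemma divide_minus_excess: "0 < hl \<Longrightarrow> hl \<le> c \<Longrightarrow> c / hl - excess hl c = 1"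
  by (simp add: excess_def le_divide_eq)

text \<open>Block counts whose nonempty blocks form one cyclic run starting at block \<open>i0\<close>, such that
  the block after \<open>i0\<close> is full.\<close>

locale cyclic_run =
  fixes K d i0 :: nat and cnt :: "nat \<Rightarrow> nat"
  assumes two_le_K: "2 \<le> K"
    and cnt_le: "\<And>i. i < K \<Longrightarrow> cnt i \<le> d"
    and i0_less: "i0 < K"
    and cnt_i0: "0 < cnt i0"
    and cnt_before_i0: "cnt (cyc_pred K i0) = 0"
    and cnt_pred_pos: "\<And>i. i < K \<Longrightarrow> i \<noteq> i0 \<Longrightarrow> 0 < cnt i \<Longrightarrow> 0 < cnt (cyc_pred K i)"
    and cnt_after_i0: "\<And>j. j < K \<Longrightarrow> cyc_pred K j = i0 \<Longrightarrow> cnt j = d"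
begin

lemma cyc_pred_less_K: "i < K \<Longrightarrow> cyc_pred K i < K"
  using cyc_pred_less two_le_K by simp

context
  fixes h hl :: real and C :: "nat \<Rightarrow> real"
  assumes hl: "0 < hl" "hl \<le> h"
    and C: "\<And>i. C i = h * real (cnt i)"
begin

lemma onset_eq: "i < K \<Longrightarrow> onset K hl C i = (if i = i0 then 1 else 0)"
proof -
  define Z where "Z i = (if 0 < cnt i then 1 else (0::real))" for i
  have Z: "C i / hl - excess hl (C i) = Z i" if "i < K" for i
  proof (cases "0 < cnt i")
    case True
    then have "hl \<le> C i"
      using C[of i] hl by (simp add: order_trans[OF _ mult_le_cancel_left1[THEN iffD2]])
    then show ?thesis using True divide_minus_excess hl by (simp add: Z_def)
  qed (use C[of i] in \<open>simp add: Z_def\<close>)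
  assume i: "i < K"
  have "onset K hl C i = max 0 (Z i - Z (cyc_pred K i))"
    unfolding onset_def using Z[OF i] Z[OF cyc_pred_less_K[OF i]]
    by (simp add: diff_divide_distrib algebra_simps)
  then show ?thesis
    using i cnt_i0 cnt_before_i0 cnt_pred_pos[OF i] by (auto simp: Z_def)
qed

lemma plateau_eq:
  assumes "h \<le> hh"
  shows "plateau K hl (hh * real d) C = h * real d"
proof -
  define nx where "nx = (if i0 + 1 = K then 0 else i0 + 1)"
  have nx_less: "nx < K"
    using i0_less two_le_K by (simp add: nx_def)
  have pred_eq_i0: "cyc_pred K j = i0 \<longleftrightarrow> j = nx" if "j < K" for j
    using that i0_less two_le_K unfolding cyc_pred_def nx_def by auto
  have "C j - masked K hl (hh * real d) C j = (if j = nx then h * real d else 0)" if j: "j < K" for j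
  proof (cases "j = nx")
    case True
    then have "C j = h * real d" and "onset K hl C (cyc_pred K j) = 1"
      using C[of j] cnt_after_i0[OF j] pred_eq_i0[OF j] onset_eq[OF cyc_pred_less_K[OF j]] by simp_all
    moreover have "h * real d \<le> hh * real d"
      using assms by (simp add: mult_right_mono)
    ultimately show ?thesis using True by (simp add: masked_def)
  next
    case False
    then have "onset K hl C (cyc_pred K j) = 0"
      using pred_eq_i0[OF j] onset_eq[OF cyc_pred_less_K[OF j]] by simp
    moreover have "0 \<le> C j"
      using C[of j] hl by simp
    ultimately show ?thesis using False by (simp add: masked_def)
  qed
  then have "plateau K hl (hh * real d) C = (\<Sum>j<K. if j = nx then h * real d else 0)"
    unfolding plateau_def sum_subtractf[symmetric] by (intro sum.cong) simp_all
  then show ?thesis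
    using nx_less by simp
qed

lemma core_out_sum_diff:
  assumes "h \<le> hh" and M: "hh * real K * real d \<le> M"
  shows "(\<Sum>j<K. core_out K hl (hh * real d) M C j) - (\<Sum>j<K. core_out K hl (hh * real d) M C (K + j))
    = h * (real ((i0 + 1) * d) - real (cnt i0))"
proof -
  let ?P = "plateau K hl (hh * real d) C"
  have h0: "0 < h" using hl by simp
  have "core_out K hl (hh * real d) M C j - core_out K hl (hh * real d) M C (K + j)
      = (if j = i0 then h * (real ((i0 + 1) * d) - real (cnt i0)) else 0)" if j: "j < K" for j
  proof -
    have "C j \<le> h * real d"
      using C[of j] cnt_le[OF j] h0 by simp
    moreover have "h * real d \<le> real (j + 1) * (h * real d)"
      using h0 mult_right_mono[of 1 "real (j + 1)" "h * real d"] by simp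
    ultimately have nonneg: "0 \<le> real (j + 1) * ?P - C j"
      using plateau_eq[OF assms(1)] by simp
    show ?thesis
    proof (cases "j = i0")
      case True
      have "real (j + 1) * (h * real d) \<le> real K * (hh * real d)"
        using j hl assms(1) by (intro mult_mono) (auto simp: mult_right_mono)
      then have "real (j + 1) * ?P - C j - M * onset K hl C j \<le> 0"
        using True onset_eq[OF j] C[of j] h0 M plateau_eq[OF assms(1)]
        by (simp add: algebra_simps add_increasing2)
      then show ?thesis
        using j True nonneg C[of j] plateau_eq[OF assms(1)] by (simp add: core_out_def algebra_simps)
    next
      case False
      then show ?thesis using j onset_eq[OF j] by (simp add: core_out_def)
    qed
  qed
  then have "(\<Sum>j<K. core_out K hl (hh * real d) M C j) - (\<Sum>j<K. core_out K hl (hh * real d) M C (K + j))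
      = (\<Sum>j<K. if j = i0 then h * (real ((i0 + 1) * d) - real (cnt i0)) else 0)"
    unfolding sum_subtractf[symmetric] by (intro sum.cong) simp_all
  then show ?thesis
    using i0_less by simp
qed

lemma core_out_plateau: "h \<le> hh \<Longrightarrow> core_out K hl (hh * real d) M C (K + K) = h * real d"
  using plateau_eq hl by (simp add: core_out_def)

lemma core_out_total: "core_out K hl D M C (K + K + 1) = h * real (\<Sum>j<K. cnt j)"
proof -
  have "(\<Sum>j<K. C j) = h * real (\<Sum>j<K. cnt j)"
    by (simp add: C sum_distrib_left)
  moreover have "0 \<le> h * real (\<Sum>j<K. cnt j)"
    using hl by (simp del: of_nat_sum)
  ultimately show ?thesis by (simp add: core_out_def)
qed

end

end

section \<open>Arcs on a discrete circle\<close>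

definition in_cyclic_arc :: "nat \<Rightarrow> nat \<Rightarrow> nat \<Rightarrow> nat \<Rightarrow> bool" where
  "in_cyclic_arc m L n j \<longleftrightarrow> (L \<le> j \<and> j < L + n) \<or> j + m < L + n"

definition block_count :: "nat \<Rightarrow> (nat \<Rightarrow> bool) \<Rightarrow> nat \<Rightarrow> nat" where
  "block_count d P i = card {j \<in> {i * d..<i * d + d}. P j}"

lemma mem_block_iff_div: "0 < d \<Longrightarrow> j \<in> {i * d..<i * d + d} \<longleftrightarrow> j div d = (i :: nat)"
  unfolding atLeastLessThan_iff
  by (metis add_diff_inverse_nat diff_add_inverse2 div_less_iff_less_mult div_times_less_eq_dividend
      le_less_Suc_eq less_eq_div_iff_mult_less_eq mult_Suc not_add_less2)

lemma block_count_le: "block_count d P i \<le> d"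
  using card_mono[of "{i * d..<i * d + d}" "{j \<in> {i * d..<i * d + d}. P j}"]
  by (simp add: block_count_def subset_iff)

lemma block_count_pos: "j \<in> {i * d..<i * d + d} \<Longrightarrow> P j \<Longrightarrow> 0 < block_count d P i"
  unfolding block_count_def by (subst card_gt_0_iff) auto

lemma block_count_pos_iff: "0 < block_count d P i \<longleftrightarrow> (\<exists>j\<in>{i * d..<i * d + d}. P j)"
  unfolding block_count_def by (subst card_gt_0_iff) auto

lemma block_count_full: "(\<And>j. j \<in> {i * d..<i * d + d} \<Longrightarrow> P j) \<Longrightarrow> block_count d P i = d"
proof -
  assume "\<And>j. j \<in> {i * d..<i * d + d} \<Longrightarrow> P j"
  then have "{j \<in> {i * d..<i * d + d}. P j} = {i * d..<i * d + d}"
    by auto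
  then show ?thesis
    unfolding block_count_def by simp
qed

lemma block_count_zero: "(\<And>j. j \<in> {i * d..<i * d + d} \<Longrightarrow> \<not> P j) \<Longrightarrow> block_count d P i = 0"
  unfolding block_count_def by auto

lemma sum_block_count: "(\<Sum>i<K. block_count d P i) = card {j \<in> {..<K * d}. P j}"
proof -
  have card_eq: "card {j \<in> A. P j} = (\<Sum>j\<in>A. if P j then 1 else 0)" if "finite A" for A :: "nat set"
    using that by (simp add: sum.If_cases Int_def)
  have "(\<Sum>i<K. block_count d P i) = (\<Sum>i<K. \<Sum>j\<in>{i * d..<i * d + d}. if P j then 1 else 0)"
    unfolding block_count_def by (simp only: card_eq finite_atLeastLessThan)
  also have "\<dots> = card {j \<in> {..<K * d}. P j}"
    by (simp only: sum.nat_group card_eq finite_lessThan)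
  finally show ?thesis .
qed

text \<open>An arc of length \<open>n\<close> starting at \<open>L\<close> on the discrete circle of \<open>K * d\<close> points, cut into \<open>K\<close>
  blocks of \<open>d\<close> points; the arc is long enough to fill a block and short enough to miss one.\<close>

locale arc_blocks =
  fixes K d L n :: nat
  assumes three_le_K: "3 \<le> K" and d_pos: "0 < d" and L_less: "L < K * d"
    and n_lower: "2 * d \<le> n" and n_upper: "n + 2 * d \<le> K * d"
begin

abbreviation arc :: "nat \<Rightarrow> bool" where
  "arc \<equiv> in_cyclic_arc (K * d) L n"

definition first_block :: nat where
  "first_block = L div d"

lemma first_block_less: "first_block < K"
  using L_less d_pos by (simp add: first_block_def less_mult_imp_div_less)

lemma L_in_first_block: "first_block * d \<le> L" "L < first_block * d + d"
  using mem_block_iff_div[OF d_pos, of L first_block] by (auto simp: first_block_def)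

lemma last_block_end: "(K - 1) * d + d = K * d"
  using three_le_K by (metis Suc_diff_1 add.commute less_le_trans mult_Suc zero_less_numeral)

lemma block_count_first_block: "block_count d arc first_block = (first_block + 1) * d - L"
proof -
  have "arc j \<longleftrightarrow> L \<le> j" if "j \<in> {first_block * d..<first_block * d + d}" for j
    using that L_in_first_block n_lower n_upper unfolding in_cyclic_arc_def by auto
  then have "{j \<in> {first_block * d..<first_block * d + d}. arc j} = {L..<first_block * d + d}"
    using L_in_first_block by auto
  then show ?thesis
    unfolding block_count_def by simp
qed

lemma arc_shift_down: "arc j \<Longrightarrow> d \<le> j \<Longrightarrow> \<not> (L \<le> j \<and> j < L + d) \<Longrightarrow> arc (j - d)"
  using n_lower unfolding in_cyclic_arc_def by auto

lemma arc_shift_wrap: "arc j \<Longrightarrow> \<not> L \<le> j \<Longrightarrow> L + d \<le> K * d \<Longrightarrow> arc (j + K * d - d)"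
  unfolding in_cyclic_arc_def by auto

lemma block_of_arc_start:
  assumes "j \<in> {i * d..<i * d + d}" "L \<le> j" "j < L + d"
  shows "i = first_block \<or> i = first_block + 1"
proof -
  have "j div d = i"
    using assms(1) mem_block_iff_div[OF d_pos] by blast
  moreover have "first_block \<le> j div d"
    using assms(2) div_le_mono[of L j d] by (simp add: first_block_def)
  moreover have "j div d \<le> first_block + 1"
    using assms(3) div_le_mono[of j "L + d" d] d_pos by (simp add: first_block_def)
  ultimately show ?thesis
    by linarith
qed

lemma block_count_pred_pos:
  assumes i: "i < K" "i \<noteq> first_block" and pos: "0 < block_count d arc i"
  shows "0 < block_count d arc (cyc_pred K i)"
proof (cases "cyc_pred K i = first_block")
  case True
  then show ?thesis using block_count_first_block L_in_first_block by simp
next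
  case pred_ne: False
  from pos obtain j where j: "j \<in> {i * d..<i * d + d}" "arc j"
    unfolding block_count_pos_iff by blast
  have not_start: "\<not> (L \<le> j \<and> j < L + d)"
    using block_of_arc_start[OF j(1)] i(2) pred_ne by (auto simp: cyc_pred_def)
  show ?thesis
  proof (cases "i = 0")
    case True
    then have pred: "cyc_pred K i = K - 1"
      by (simp add: cyc_pred_def)
    then have "(first_block + 1) * d \<le> (K - 1) * d"
      using pred_ne first_block_less by (intro mult_right_mono) simp_all
    then have "L + d \<le> K * d"
      using L_in_first_block last_block_end by simp
    moreover have "\<not> L \<le> j"
      using not_start j(1) True by simp
    ultimately have "arc (j + K * d - d)"
      using arc_shift_wrap j(2) by blast
    moreover have "j + K * d - d \<in> {(K - 1) * d..<(K - 1) * d + d}"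
      using j(1) True last_block_end by simp arith
    ultimately show ?thesis
      using pred block_count_pos by metis
  next
    case False
    then have pred: "cyc_pred K i = i - 1"
      by (simp add: cyc_pred_def)
    have blk: "(i - 1) * d + d = i * d"
      using False by (metis Suc_diff_1 add.commute mult_Suc neq0_conv)
    have "arc (j - d)"
      using arc_shift_down[OF j(2) _ not_start] j(1) blk by simp
    moreover have "j - d \<in> {(i - 1) * d..<(i - 1) * d + d}"
      using j(1) blk by auto
    ultimately show ?thesis
      using pred block_count_pos by metis
  qed
qed

lemma block_count_before_first: "block_count d arc (cyc_pred K first_block) = 0"
proof (cases "first_block = 0")
  case True
  have "(K - 1) * d \<ge> 2 * d"
    using three_le_K by (intro mult_right_mono) auto
  then show ?thesis
    using True L_in_first_block last_block_end n_upper
    by (intro block_count_zero) (auto simp: cyc_pred_def in_cyclic_arc_def)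
next
  case False
  moreover have "(first_block - 1) * d + d = first_block * d"
    using False by (metis Suc_diff_1 add.commute mult_Suc neq0_conv)
  ultimately show ?thesis
    using L_in_first_block n_upper
    by (intro block_count_zero) (auto simp: cyc_pred_def in_cyclic_arc_def)
qed

lemma block_count_after_first: "j < K \<Longrightarrow> cyc_pred K j = first_block \<Longrightarrow> block_count d arc j = d"
proof (cases "j = 0")
  case True
  assume "cyc_pred K j = first_block"
  then have "K * d - d \<le> L"
    using True L_in_first_block last_block_end by (simp add: cyc_pred_def)
  then show ?thesis
    using True n_lower by (intro block_count_full) (auto simp: in_cyclic_arc_def)
next
  case False
  assume "cyc_pred K j = first_block"
  then have "j = first_block + 1"
    using False by (simp add: cyc_pred_def)
  then show ?thesis
    using L_in_first_block n_lower by (intro block_count_full) (auto simp: in_cyclic_arc_def)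
qed

lemma sum_block_count_arc: "(\<Sum>i<K. block_count d arc i) = n"
proof -
  have "card {j \<in> {..<K * d}. arc j} = n"
  proof (cases "L + n \<le> K * d")
    case True
    then have "{j \<in> {..<K * d}. arc j} = {L..<L + n}"
      unfolding in_cyclic_arc_def by auto
    then show ?thesis by simp
  next
    case False
    then have "{j \<in> {..<K * d}. arc j} = {L..<K * d} \<union> {..<L + n - K * d}"
      using L_less n_upper unfolding in_cyclic_arc_def by auto
    moreover have "{L..<K * d} \<inter> {..<L + n - K * d} = {}"
      using n_upper by auto
    ultimately show ?thesis
      using L_less False by (simp add: card_Un_disjoint)
  qed
  then show ?thesis
    by (simp add: sum_block_count)
qed

sublocale cyclic_run K d first_block "block_count d arc"
proof
  show "0 < block_count d arc first_block"
    using block_count_first_block L_in_first_block by simp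
qed (use three_le_K block_count_le first_block_less block_count_before_first block_count_pred_pos
      block_count_after_first in auto)

end

lemma block_sum_indicator: "block_sum d (\<lambda>j. if P j then h else 0) i = h * real (block_count d P i)"
  by (simp add: block_sum_def block_count_def sum.If_cases Int_def mult.commute)

section \<open>Soft indicators and the \<open>L\<^sup>1\<close> error\<close>

definition ramp :: "real \<Rightarrow> real \<Rightarrow> real" where
  "ramp \<delta> t = max 0 t - max 0 (t - \<delta>)"

definition soft_indicator :: "real \<Rightarrow> real \<Rightarrow> real \<Rightarrow> real \<Rightarrow> real" where
  "soft_indicator \<delta> PL PR t = (ramp \<delta> (t - PL) - ramp \<delta> (t - PR)) / \<delta>"

lemma ramp_nonpos: "t \<le> 0 \<Longrightarrow> 0 < \<delta> \<Longrightarrow> ramp \<delta> t = 0"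
  by (simp add: ramp_def)

lemma ramp_ge: "\<delta> \<le> t \<Longrightarrow> 0 < \<delta> \<Longrightarrow> ramp \<delta> t = \<delta>"
  by (simp add: ramp_def)

lemma ramp_bounds: "0 < \<delta> \<Longrightarrow> 0 \<le> ramp \<delta> t \<and> ramp \<delta> t \<le> \<delta>"
  by (auto simp: ramp_def max_def)

lemma ramp_mono: "0 < \<delta> \<Longrightarrow> s \<le> t \<Longrightarrow> ramp \<delta> s \<le> ramp \<delta> t"
  by (simp add: ramp_def)

lemma soft_indicator_bounds:
  assumes "0 < \<delta>" "PL \<le> PR"
  shows "0 \<le> soft_indicator \<delta> PL PR t \<and> soft_indicator \<delta> PL PR t \<le> 1"
proof -
  have "ramp \<delta> (t - PR) \<le> ramp \<delta> (t - PL)"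
    using assms by (intro ramp_mono) auto
  then show ?thesis
    using ramp_bounds[OF assms(1), of "t - PL"] ramp_bounds[OF assms(1), of "t - PR"] assms(1)
    by (auto simp: soft_indicator_def divide_le_eq)
qed

lemma soft_indicator_eq_indicator:
  assumes "0 < \<delta>" and "\<beta> \<le> PL" "\<beta> + w < PR" "0 \<le> w"
    and "t \<notin> {\<beta>..PL + \<delta>}" "t \<notin> {\<beta> + w..PR + \<delta>}"
  shows "soft_indicator \<delta> PL PR t = (if \<beta> \<le> t \<and> t \<le> \<beta> + w then 1 else 0)"
proof -
  consider "t < \<beta>" | "PL + \<delta> < t" "t < \<beta> + w" | "PL + \<delta> < t" "PR + \<delta> < t"
    using assms(4-6) by force
  then show ?thesis
    by cases (use assms(1-4) in \<open>simp_all add: soft_indicator_def ramp_nonpos ramp_ge\<close>)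
qed

definition periodic_arc :: "real \<Rightarrow> real \<Rightarrow> real \<Rightarrow> bool" where
  "periodic_arc \<beta> w y \<longleftrightarrow> (\<exists>k::int. \<beta> + 2 * pi * k \<le> y \<and> y \<le> \<beta> + w + 2 * pi * k)"

lemma periodic_arc_two_copies:
  assumes "w < 2 * pi" "- \<Delta> < \<beta>" "\<beta> < 2 * pi" "0 \<le> y" "y < 2 * pi - \<Delta>"
  shows "periodic_arc \<beta> w y \<longleftrightarrow> (\<beta> \<le> y \<and> y \<le> \<beta> + w) \<or> (\<beta> \<le> y + 2 * pi \<and> y + 2 * pi \<le> \<beta> + w)"
proof
  assume "periodic_arc \<beta> w y"
  then obtain k :: int where k: "\<beta> + 2 * pi * k \<le> y" "y \<le> \<beta> + w + 2 * pi * k"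
    unfolding periodic_arc_def by blast
  have "k \<le> 0"
  proof (rule ccontr)
    assume "\<not> k \<le> 0"
    then have "2 * pi \<le> 2 * pi * k"
      by simp
    then show False using k assms by linarith
  qed
  moreover have "-1 \<le> k"
  proof (rule ccontr)
    assume "\<not> -1 \<le> k"
    then have "2 * pi * k \<le> 2 * pi * (-2)"
      by (intro mult_left_mono) auto
    then show False using k assms by linarith
  qed
  ultimately have "k = 0 \<or> k = -1"
    by linarith
  then show "(\<beta> \<le> y \<and> y \<le> \<beta> + w) \<or> (\<beta> \<le> y + 2 * pi \<and> y + 2 * pi \<le> \<beta> + w)"
    using k by auto
next
  assume "(\<beta> \<le> y \<and> y \<le> \<beta> + w) \<or> (\<beta> \<le> y + 2 * pi \<and> y + 2 * pi \<le> \<beta> + w)"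
  then show "periodic_arc \<beta> w y"
    unfolding periodic_arc_def
  proof
    assume "\<beta> \<le> y \<and> y \<le> \<beta> + w"
    then show "\<exists>k::int. \<beta> + 2 * pi * k \<le> y \<and> y \<le> \<beta> + w + 2 * pi * k"
      by (intro exI[of _ 0]) simp
  next
    assume "\<beta> \<le> y + 2 * pi \<and> y + 2 * pi \<le> \<beta> + w"
    then show "\<exists>k::int. \<beta> + 2 * pi * k \<le> y \<and> y \<le> \<beta> + w + 2 * pi * k"
      by (intro exI[of _ "-1"]) simp
  qed
qed

lemma nn_integral_le_if_zero_off_sets:
  fixes f :: "real \<Rightarrow> ennreal" and \<B> :: "real set set"
  assumes "finite \<B>" "\<B> \<subseteq> sets borel" "\<And>B. B \<in> \<B> \<Longrightarrow> emeasure lborel B \<le> ennreal r"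
    and bound: "\<And>y. f y \<le> ennreal c" and zero: "\<And>y. y \<notin> \<Union>\<B> \<Longrightarrow> f y = 0"
    and "0 \<le> c" "0 \<le> r"
  shows "(\<integral>\<^sup>+ y. f y \<partial>lborel) \<le> ennreal (real (card \<B>) * c * r)"
proof -
  have "f y \<le> (\<Sum>B\<in>\<B>. ennreal c * indicator B y)" for y
  proof (cases "y \<in> \<Union>\<B>")
    case True
    then obtain B where "B \<in> \<B>" "y \<in> B"
      by blast
    then have "ennreal c * indicator B y \<le> (\<Sum>B\<in>\<B>. ennreal c * indicator B y)"
      using assms(1) by (intro member_le_sum) auto
    then show ?thesis
      using bound[of y] \<open>y \<in> B\<close> by simp
  qed (simp add: zero)
  then have "(\<integral>\<^sup>+ y. f y \<partial>lborel) \<le> (\<integral>\<^sup>+ y. (\<Sum>B\<in>\<B>. ennreal c * indicator B y) \<partial>lborel)"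
    by (rule nn_integral_mono)
  also have "\<dots> = (\<Sum>B\<in>\<B>. \<integral>\<^sup>+ y. ennreal c * indicator B y \<partial>lborel)"
    using assms(2) by (intro nn_integral_sum) auto
  also have "\<dots> = (\<Sum>B\<in>\<B>. ennreal c * emeasure lborel B)"
    using assms(2) by (intro sum.cong refl nn_integral_cmult_indicator) auto
  also have "\<dots> \<le> (\<Sum>B\<in>\<B>. ennreal c * ennreal r)"
    using assms(3) by (intro sum_mono mult_left_mono) auto
  also have "\<dots> = ennreal (real (card \<B>) * c * r)"
    using assms(6,7) by (simp add: ennreal_mult' ennreal_of_nat_eq_real_of_nat mult.assoc)
  finally show ?thesis .
qed

lemma soft_sum_eq_periodic_arc:
  assumes "w < 2 * pi" "0 < \<delta>" "0 < \<Delta>" "\<Delta> \<le> w"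
    and "\<beta> \<le> PL" "PL < \<beta> + \<Delta>" "0 \<le> PL" "PL < 2 * pi" "\<beta> + w < PR"
    and y: "0 \<le> y" "y < 2 * pi - \<Delta>"
    and "y \<notin> {\<beta>..PL + \<delta>}" "y \<notin> {\<beta> + w..PR + \<delta>}"
    and "y \<notin> {\<beta> - 2 * pi..PL + \<delta> - 2 * pi}" "y \<notin> {\<beta> + w - 2 * pi..PR + \<delta> - 2 * pi}"
  shows "soft_indicator \<delta> PL PR y + soft_indicator \<delta> PL PR (y + 2 * pi) = (if periodic_arc \<beta> w y then 1 else 0)"
proof -
  have "y + 2 * pi \<notin> {\<beta>..PL + \<delta>}" "y + 2 * pi \<notin> {\<beta> + w..PR + \<delta>}"
    using assms(14,15) by auto
  then have "soft_indicator \<delta> PL PR y + soft_indicator \<delta> PL PR (y + 2 * pi)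
      = (if \<beta> \<le> y \<and> y \<le> \<beta> + w then 1 else 0) + (if \<beta> \<le> y + 2 * pi \<and> y + 2 * pi \<le> \<beta> + w then 1 else 0)"
    using soft_indicator_eq_indicator[OF assms(2,5,9)] assms(4,12,13) assms(3) by simp
  moreover have "\<not> ((\<beta> \<le> y \<and> y \<le> \<beta> + w) \<and> (\<beta> \<le> y + 2 * pi \<and> y + 2 * pi \<le> \<beta> + w))"
    using assms(1) by auto
  ultimately show ?thesis
    using periodic_arc_two_copies[OF assms(1) _ _ y] assms(5-8) by auto
qed

lemma L1T_dist_periodic_arc_soft:
  assumes h: "0 < h" and w: "w < 2 * pi" and \<delta>: "0 < \<delta>" and \<Delta>: "0 < \<Delta>" "\<Delta> \<le> w"
    and PL: "\<beta> \<le> PL" "PL < \<beta> + \<Delta>" "0 \<le> PL" "PL < 2 * pi" and PR: "\<beta> + w < PR" "PR \<le> \<beta> + w + \<Delta>"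
  shows "L1T_dist (\<lambda>y. if periodic_arc \<beta> w y then h else 0)
      (\<lambda>y. h * (soft_indicator \<delta> PL PR y + soft_indicator \<delta> PL PR (y + 2 * pi))) \<le> ennreal (10 * h * (\<Delta> + \<delta>))"
proof -
  define err where "err y = \<bar>(if periodic_arc \<beta> w y then h else 0)
    - h * (soft_indicator \<delta> PL PR y + soft_indicator \<delta> PL PR (y + 2 * pi))\<bar>" for y
  define \<B> where "\<B> = set [{2 * pi - \<Delta>..2 * pi}, {\<beta>..PL + \<delta>}, {\<beta> + w..PR + \<delta>},
    {\<beta> - 2 * pi..PL + \<delta> - 2 * pi}, {\<beta> + w - 2 * pi..PR + \<delta> - 2 * pi}]"
  have card: "card \<B> \<le> 5"
    unfolding \<B>_def by (rule order_trans[OF card_length]) simp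
  have "PL \<le> PR"
    using PL PR \<Delta> by linarith
  then have range: "0 \<le> h * (soft_indicator \<delta> PL PR y + soft_indicator \<delta> PL PR (y + 2 * pi))
      \<and> h * (soft_indicator \<delta> PL PR y + soft_indicator \<delta> PL PR (y + 2 * pi)) \<le> h * 2" for y
    using soft_indicator_bounds[OF \<delta>, of PL PR y] soft_indicator_bounds[OF \<delta>, of PL PR "y + 2 * pi"] h
    by (intro conjI mult_nonneg_nonneg mult_left_mono) auto
  have "err y \<le> 2 * h" for y
    unfolding err_def using range[of y] h by (auto simp: abs_le_iff)
  then have bound: "ennreal (err y) * indicator {0..2 * pi} y \<le> ennreal (2 * h)" for y
    by (simp add: indicator_def ennreal_leI)
  have zero: "ennreal (err y) * indicator {0..2 * pi} y = 0" if "y \<notin> \<Union>\<B>" for y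
  proof (cases "y \<in> {0..2 * pi}")
    case True
    with that have "y < 2 * pi - \<Delta>"
      by (auto simp: \<B>_def)
    with True that have "err y = 0"
      unfolding err_def using soft_sum_eq_periodic_arc[OF w \<delta> \<Delta> PL PR(1)] by (simp add: \<B>_def)
    then show ?thesis by simp
  qed simp
  have measure: "emeasure lborel B \<le> ennreal (\<Delta> + \<delta>)" if "B \<in> \<B>" for B
    using that PL PR \<delta> \<Delta> by (auto simp: \<B>_def emeasure_lborel_Icc_eq simp del: ennreal_plus intro!: ennreal_leI)
  have "L1T_dist (\<lambda>y. if periodic_arc \<beta> w y then h else 0)
      (\<lambda>y. h * (soft_indicator \<delta> PL PR y + soft_indicator \<delta> PL PR (y + 2 * pi)))
      \<le> ennreal (real (card \<B>) * (2 * h) * (\<Delta> + \<delta>))"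
    unfolding L1T_dist_def err_def[symmetric]
    by (rule nn_integral_le_if_zero_off_sets[OF _ _ measure bound zero]) (use h \<delta> \<Delta> in \<open>auto simp: \<B>_def\<close>)
  also have "\<dots> \<le> ennreal (10 * h * (\<Delta> + \<delta>))"
    using card h \<delta> \<Delta> by (intro ennreal_leI) (simp add: mult_right_mono)
  finally show ?thesis .
qed

section \<open>The shift-DeepONet\<close>

text \<open>On samples of an arc, the last two inputs of the final layers are \<open>h d\<close> and \<open>h n\<close>
  (lemmas \<open>core_out_plateau\<close> and \<open>core_out_total\<close>), hence the division by \<open>d\<close>.\<close>

definition scale_W :: "nat \<Rightarrow> nat \<Rightarrow> nat \<Rightarrow> nat \<Rightarrow> real" where
  "scale_W K d i j = 1 / real d * unit_vec (K + K) j"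

definition shift_W :: "nat \<Rightarrow> nat \<Rightarrow> real \<Rightarrow> real \<Rightarrow> nat \<Rightarrow> nat \<Rightarrow> real" where
  "shift_W K d \<Delta> \<delta> i =
     fun_append K (\<lambda>_. - \<Delta>) (fun_append K (\<lambda>_. \<Delta>)
       (\<lambda>t. if t = 0 then ((if odd i then - \<delta> else 0) + (if 4 \<le> i then 2 * pi else 0)) / real d
            else if 2 \<le> i mod 4 then - \<Delta> else 0))"

definition scale_net :: "nat \<Rightarrow> nat \<Rightarrow> real \<Rightarrow> real \<Rightarrow> layer list" where
  "scale_net K d hl hh = core_net K d hl (hh * real d) (hh * real K * real d)
     @ [dense_layer (K + (K + 2)) 8 (scale_W K d) (\<lambda>_. 0)]"

definition shift_net :: "nat \<Rightarrow> nat \<Rightarrow> real \<Rightarrow> real \<Rightarrow> real \<Rightarrow> real \<Rightarrow> layer list" where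
  "shift_net K d hl hh \<Delta> \<delta> = core_net K d hl (hh * real d) (hh * real K * real d)
     @ [dense_layer (K + (K + 2)) 8 (shift_W K d \<Delta> \<delta>) (\<lambda>_. 0)]"

lemma affine_scale_layer:
  "affine (dense_layer (K + (K + 2)) 8 (scale_W K d) (\<lambda>_. 0)) (map v [0..<K + (K + 2)])
    = map (\<lambda>_. v (K + K) / real d) [0..<8]"
  unfolding affine_dense_layer scale_W_def by (simp only: sum_scaled_unit_vec_mult) simp

lemma sum_fun_append3_mult:
  "(\<Sum>j<K + (K + 2). fun_append K f (fun_append K g r) j * v j)
    = (\<Sum>j<K. f j * v j) + (\<Sum>j<K. g j * v (K + j)) + r 0 * v (K + K) + r 1 * (v (K + K + 1) :: real)"
  by (simp only: sum_lessThan_add_nat) (simp add: numeral_2_eq_2 add.assoc)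

lemma affine_shift_layer:
  "affine (dense_layer (K + (K + 2)) 8 (shift_W K d \<Delta> \<delta>) (\<lambda>_. 0)) (map v [0..<K + (K + 2)])
    = map (\<lambda>i. \<Delta> * ((\<Sum>j<K. v (K + j)) - (\<Sum>j<K. v j))
               + ((if odd i then - \<delta> else 0) + (if 4 \<le> i then 2 * pi else 0)) / real d * v (K + K)
               + (if 2 \<le> i mod 4 then - \<Delta> else 0) * v (K + K + 1)) [0..<8]"
proof -
  have "(\<Sum>j<K. - \<Delta> * v j) + (\<Sum>j<K. \<Delta> * v (K + j)) = \<Delta> * ((\<Sum>j<K. v (K + j)) - (\<Sum>j<K. v j))"
    by (simp add: sum_distrib_left right_diff_distrib sum_negf)
  then show ?thesis
    unfolding affine_dense_layer shift_W_def sum_fun_append3_mult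
    by (simp only: add_0_right simp_thms if_True if_False one_neq_zero)
qed

definition shift_offset :: "real \<Rightarrow> real \<Rightarrow> nat \<Rightarrow> real" where
  "shift_offset \<delta> N i =
     (if odd i then - \<delta> else 0) + (if 4 \<le> i then 2 * pi else 0) + (if 2 \<le> i mod 4 then - N else 0)"

definition branch_coeff :: "real \<Rightarrow> nat \<Rightarrow> real" where
  "branch_coeff \<delta> i = (if i mod 4 = 0 \<or> i mod 4 = 3 then 1 / \<delta> else - 1 / \<delta>)"

definition branch_net :: "nat \<Rightarrow> real \<Rightarrow> layer list" where
  "branch_net m \<delta> = [dense_layer m 8 (\<lambda>_ _. 0) (branch_coeff \<delta>)]"

definition trunk_net :: "layer list" where
  "trunk_net = [dense_layer 1 1 (\<lambda>_ _. 1) (\<lambda>_. 0), dense_layer 1 8 (\<lambda>_ _. 1) (\<lambda>_. 0)]"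

lemma nn_eval_branch_net: "nn_eval (branch_net m \<delta>) (map s [0..<m]) = map (branch_coeff \<delta>) [0..<8]"
  unfolding branch_net_def by (simp add: affine_dense_layer)

lemma nn_eval_trunk_net: "nn_eval trunk_net [z] = map (\<lambda>_. max 0 z) [0..<8]"
proof -
  have "[z] = map (\<lambda>_. z) [0..<1]"
    by simp
  then show ?thesis
    unfolding trunk_net_def nn_eval.simps by (simp only: affine_dense_layer relu_vec_map) simp
qed

lemma sum_branch_coeff_relu:
  "(\<Sum>i<8. branch_coeff \<delta> i * max 0 (y - P + shift_offset \<delta> N i))
    = soft_indicator \<delta> P (P + N) y + soft_indicator \<delta> P (P + N) (y + 2 * pi)"
proof -
  have sum8: "(\<Sum>i<(8::nat). f i) = f 0 + f 1 + f 2 + f 3 + f 4 + f 5 + f 6 + (f 7 :: real)" for f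
    by (simp add: eval_nat_numeral)
  show ?thesis
    unfolding sum8 soft_indicator_def ramp_def
    by (simp add: branch_coeff_def shift_offset_def diff_divide_distrib add_divide_distrib algebra_simps)
qed

context arc_blocks
begin

context
  fixes h hl hh :: real
  assumes hl: "0 < hl" "hl \<le> h" "h \<le> hh"
begin

lemma nn_eval_core_net_arc:
  "nn_eval (core_net K d hl (hh * real d) (hh * real K * real d) @ [Lr]) (map (\<lambda>j. if arc j then h else 0) [0..<K * d])
    = affine Lr (map (core_out K hl (hh * real d) (hh * real K * real d) (block_sum d (\<lambda>j. if arc j then h else 0)))
                  [0..<K + (K + 2)])"
  using three_le_K hl by (intro nn_eval_core_net) auto

lemma nn_eval_scale_net_arc:
  "nn_eval (scale_net K d hl hh) (map (\<lambda>j. if arc j then h else 0) [0..<K * d]) = map (\<lambda>_. h) [0..<8]"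
  unfolding scale_net_def nn_eval_core_net_arc affine_scale_layer
  using core_out_plateau[OF hl(1,2) block_sum_indicator hl(3)] d_pos by simp

lemma nn_eval_shift_net_arc:
  "nn_eval (shift_net K d hl hh \<Delta> \<delta>) (map (\<lambda>j. if arc j then h else 0) [0..<K * d])
    = map (\<lambda>i. h * (shift_offset \<delta> (real n * \<Delta>) i - real L * \<Delta>)) [0..<8]"
proof -
  let ?v = "core_out K hl (hh * real d) (hh * real K * real d) (block_sum d (\<lambda>j. if arc j then h else 0))"
  have "real ((first_block + 1) * d) - real (block_count d arc first_block) = real L"
    using block_count_first_block L_in_first_block by simp
  then have diff: "(\<Sum>j<K. ?v (K + j)) - (\<Sum>j<K. ?v j) = - (h * real L)"
    using core_out_sum_diff[OF hl(1,2) block_sum_indicator hl(3) order_refl] by simp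
  have plateau: "?v (K + K) = h * real d"
    by (rule core_out_plateau[OF hl(1,2) block_sum_indicator hl(3)])
  have total: "?v (K + K + 1) = h * real n"
    using core_out_total[OF hl(1,2) block_sum_indicator] sum_block_count_arc by simp
  have cancel: "x / real d * (h * real d) = h * x" for x
    using d_pos by simp
  show ?thesis
    unfolding shift_net_def nn_eval_core_net_arc affine_shift_layer diff plateau total cancel
    by (simp add: shift_offset_def algebra_simps)
qed

lemma sdon_eval_arc:
  assumes samples: "map u xs = map (\<lambda>j. if arc j then h else 0) [0..<K * d]"
  shows "sdon_eval xs 8 (branch_net (K * d) \<delta>) trunk_net (scale_net K d hl hh) (shift_net K d hl hh \<Delta> \<delta>) u y
    = h * (soft_indicator \<delta> (real L * \<Delta>) (real L * \<Delta> + real n * \<Delta>) y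
         + soft_indicator \<delta> (real L * \<Delta>) (real L * \<Delta> + real n * \<Delta>) (y + 2 * pi))"
proof -
  have "max 0 (h * x) = h * max 0 x" for x
    using hl by (auto simp: max_def mult_le_0_iff zero_le_mult_iff)
  then have scale: "max 0 (h * y + h * (c - real L * \<Delta>)) = h * max 0 (y - real L * \<Delta> + c)" for c
    by (metis distrib_left add.commute add_diff_eq)
  have "sdon_eval xs 8 (branch_net (K * d) \<delta>) trunk_net (scale_net K d hl hh) (shift_net K d hl hh \<Delta> \<delta>) u y
      = (\<Sum>i<8. branch_coeff \<delta> i * max 0 (h * y + h * (shift_offset \<delta> (real n * \<Delta>) i - real L * \<Delta>)))"
    unfolding sdon_eval_def Let_def samples nn_eval_branch_net nn_eval_scale_net_arc
      nn_eval_shift_net_arc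
    by (intro sum.cong) (simp_all add: nn_eval_trunk_net)
  also have "\<dots> = h * (\<Sum>i<8. branch_coeff \<delta> i * max 0 (y - real L * \<Delta> + shift_offset \<delta> (real n * \<Delta>) i))"
    by (simp only: scale sum_distrib_left mult.left_commute)
  finally show ?thesis
    by (simp only: sum_branch_coeff_relu)
qed

end

end

lemma nn_wf_core_net: "nn_wf (K * d) out (core_net K d hl D M @ [dense_layer (K + (K + 2)) out W b])"
  unfolding core_net_def by (simp add: nn_wf_Cons_dense_layer nn_wf_dense_layer)

lemma nn_width_core_net: "nn_width (core_net K d hl D M @ [Lr]) \<le> 3 * K + 2"
  unfolding core_net_def nn_width_def by (simp add: dense_layer_def)

lemma nn_depth_core_net: "nn_depth (core_net K d hl D M @ [Lr]) = 4"
  unfolding core_net_def nn_depth_def by simp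

lemma sdon_wf_construction:
  "sdon_wf (K * d) 8 (branch_net (K * d) \<delta>) trunk_net (scale_net K d hl hh) (shift_net K d hl hh \<Delta> \<delta>)"
  unfolding sdon_wf_def scale_net_def shift_net_def branch_net_def trunk_net_def
  by (intro conjI nn_wf_dense_layer nn_wf_Cons_dense_layer nn_wf_core_net)

lemma sdon_width_construction:
  "sdon_width (branch_net m \<delta>) trunk_net (scale_net K d hl hh) (shift_net K d hl hh \<Delta> \<delta>) \<le> 6 * K + 5"
proof -
  have "nn_width (branch_net m \<delta>) = 0" "nn_width trunk_net = 1"
    by (simp_all add: branch_net_def trunk_net_def nn_width_def dense_layer_def)
  moreover have "nn_width (scale_net K d hl hh) \<le> 3 * K + 2" "nn_width (shift_net K d hl hh \<Delta> \<delta>) \<le> 3 * K + 2"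
    unfolding scale_net_def shift_net_def by (rule nn_width_core_net)+
  ultimately show ?thesis
    unfolding sdon_width_def by linarith
qed

lemma sdon_depth_construction:
  "sdon_depth (branch_net m \<delta>) trunk_net (scale_net K d hl hh) (shift_net K d hl hh \<Delta> \<delta>) = 4"
  unfolding sdon_depth_def scale_net_def shift_net_def nn_depth_core_net
  by (simp add: branch_net_def trunk_net_def nn_depth_def)

section \<open>Sampling the advected bump\<close>

lemma bump_eq_periodic_arc: "bump h w \<xi> x = (if periodic_arc (\<xi> - w / 2) w x then h else 0)"
proof -
  have "\<bar>x - \<xi> - 2 * pi * k\<bar> \<le> w / 2 \<longleftrightarrow> \<xi> - w / 2 + 2 * pi * k \<le> x \<and> x \<le> \<xi> - w / 2 + w + 2 * pi * k" for k
    unfolding abs_le_iff by linarith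
  then show ?thesis
    by (simp add: bump_def periodic_arc_def)
qed

lemma G_adv_bump: "G_adv a T (bump h w \<xi>) y = (if periodic_arc (\<xi> + a * T - w / 2) w y then h else 0)"
  by (simp add: G_adv_def bump_eq_periodic_arc periodic_arc_def algebra_simps)

lemma periodic_arc_shift_period: "periodic_arc (\<alpha> - 2 * pi * of_int k) w y \<longleftrightarrow> periodic_arc \<alpha> w y"
proof
  assume "periodic_arc (\<alpha> - 2 * pi * of_int k) w y"
  then obtain k' :: int where "\<alpha> - 2 * pi * k + 2 * pi * k' \<le> y" "y \<le> \<alpha> - 2 * pi * k + w + 2 * pi * k'"
    unfolding periodic_arc_def by blast
  then show "periodic_arc \<alpha> w y"
    unfolding periodic_arc_def by (intro exI[of _ "k' - k"]) (simp add: algebra_simps)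
next
  assume "periodic_arc \<alpha> w y"
  then obtain k' :: int where "\<alpha> + 2 * pi * k' \<le> y" "y \<le> \<alpha> + w + 2 * pi * k'"
    unfolding periodic_arc_def by blast
  then show "periodic_arc (\<alpha> - 2 * pi * of_int k) w y"
    unfolding periodic_arc_def by (intro exI[of _ "k' + k"]) (simp add: algebra_simps)
qed

definition grid_first :: "real \<Rightarrow> real \<Rightarrow> int" where
  "grid_first \<Delta> \<alpha> = \<lceil>\<alpha> / \<Delta>\<rceil>"

definition grid_count :: "real \<Rightarrow> real \<Rightarrow> real \<Rightarrow> int" where
  "grid_count \<Delta> \<alpha> w = \<lfloor>(\<alpha> + w) / \<Delta>\<rfloor> - \<lceil>\<alpha> / \<Delta>\<rceil> + 1"

context
  fixes \<Delta> :: real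
  assumes \<Delta>: "0 < \<Delta>"
begin

lemma grid_first_bounds: "\<alpha> \<le> grid_first \<Delta> \<alpha> * \<Delta>" "grid_first \<Delta> \<alpha> * \<Delta> < \<alpha> + \<Delta>"
proof -
  have "\<alpha> / \<Delta> \<le> grid_first \<Delta> \<alpha>" "grid_first \<Delta> \<alpha> < \<alpha> / \<Delta> + 1"
    unfolding grid_first_def by linarith+
  then show "\<alpha> \<le> grid_first \<Delta> \<alpha> * \<Delta>" "grid_first \<Delta> \<alpha> * \<Delta> < \<alpha> + \<Delta>"
    using \<Delta> by (simp_all add: pos_divide_le_eq pos_divide_less_eq field_simps)
qed

lemma grid_end_bounds:
  "\<alpha> + w < (grid_first \<Delta> \<alpha> + grid_count \<Delta> \<alpha> w) * \<Delta>"
  "(grid_first \<Delta> \<alpha> + grid_count \<Delta> \<alpha> w) * \<Delta> \<le> \<alpha> + w + \<Delta>"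
proof -
  have end_eq: "grid_first \<Delta> \<alpha> + grid_count \<Delta> \<alpha> w = \<lfloor>(\<alpha> + w) / \<Delta>\<rfloor> + 1"
    by (simp add: grid_first_def grid_count_def)
  have cancel: "(\<alpha> + w) / \<Delta> * \<Delta> = \<alpha> + w"
    using \<Delta> by simp
  have "(\<alpha> + w) / \<Delta> * \<Delta> < (\<lfloor>(\<alpha> + w) / \<Delta>\<rfloor> + 1) * \<Delta>"
    using \<Delta> by (intro mult_strict_right_mono) linarith+
  moreover have "\<lfloor>(\<alpha> + w) / \<Delta>\<rfloor> * \<Delta> \<le> (\<alpha> + w) / \<Delta> * \<Delta>"
    using \<Delta> by (intro mult_right_mono) simp_all
  ultimately show "\<alpha> + w < (grid_first \<Delta> \<alpha> + grid_count \<Delta> \<alpha> w) * \<Delta>"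
    "(grid_first \<Delta> \<alpha> + grid_count \<Delta> \<alpha> w) * \<Delta> \<le> \<alpha> + w + \<Delta>"
    unfolding end_eq cancel by (simp_all add: distrib_right)
qed

lemma grid_count_bounds: "w / \<Delta> - 1 \<le> grid_count \<Delta> \<alpha> w" "grid_count \<Delta> \<alpha> w \<le> w / \<Delta> + 1"
proof -
  have "(\<alpha> + w) / \<Delta> = \<alpha> / \<Delta> + w / \<Delta>"
    by (simp add: add_divide_distrib)
  then show "w / \<Delta> - 1 \<le> grid_count \<Delta> \<alpha> w" "grid_count \<Delta> \<alpha> w \<le> w / \<Delta> + 1"
    unfolding grid_count_def by linarith+
qed

lemma grid_point_in_interval_iff:
  "\<alpha> \<le> of_int q * \<Delta> \<and> of_int q * \<Delta> \<le> \<alpha> + w \<longleftrightarrow>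
     grid_first \<Delta> \<alpha> \<le> q \<and> q < grid_first \<Delta> \<alpha> + grid_count \<Delta> \<alpha> w"
  using \<Delta> by (simp add: grid_first_def grid_count_def ceiling_le_iff le_floor_iff pos_divide_le_eq
      pos_le_divide_eq del: of_int_diff of_int_mult)

end

lemma cyclic_arc_int:
  fixes j L n m :: int
  assumes "0 \<le> j" "j < m" "0 \<le> L" "L < m" "0 \<le> n" "n \<le> m"
  shows "(\<exists>k. L \<le> j - m * k \<and> j - m * k < L + n) \<longleftrightarrow> (L \<le> j \<and> j < L + n) \<or> j + m < L + n"
proof
  assume "\<exists>k. L \<le> j - m * k \<and> j - m * k < L + n"
  then obtain k where k: "L \<le> j - m * k" "j - m * k < L + n"
    by blast
  have "k \<le> 0"
  proof (rule ccontr)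
    assume "\<not> k \<le> 0"
    then have "m \<le> m * k" using assms by simp
    then show False using k assms by linarith
  qed
  moreover have "-1 \<le> k"
  proof (rule ccontr)
    assume "\<not> -1 \<le> k"
    then have "m * k \<le> m * (-2)" using assms by (intro mult_left_mono) auto
    then show False using k assms by linarith
  qed
  ultimately have "k = 0 \<or> k = -1"
    by linarith
  then show "(L \<le> j \<and> j < L + n) \<or> j + m < L + n"
    using k by auto
next
  assume "(L \<le> j \<and> j < L + n) \<or> j + m < L + n"
  then show "\<exists>k. L \<le> j - m * k \<and> j - m * k < L + n"
  proof
    assume "L \<le> j \<and> j < L + n"
    then show ?thesis by (intro exI[of _ 0]) simp
  next
    assume "j + m < L + n"
    then show ?thesis using assms by (intro exI[of _ "-1"]) simp
  qed
qed

lemma periodic_arc_grid_point: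
  assumes \<Delta>: "0 < \<Delta>" "real m * \<Delta> = 2 * pi" and j: "j < m"
    and n: "0 \<le> grid_count \<Delta> \<alpha> w" "grid_count \<Delta> \<alpha> w \<le> int m"
  shows "periodic_arc \<alpha> w (real j * \<Delta>)
    \<longleftrightarrow> in_cyclic_arc m (nat (grid_first \<Delta> \<alpha> mod int m)) (nat (grid_count \<Delta> \<alpha> w)) j"
proof -
  define q0 where "q0 = grid_first \<Delta> \<alpha>"
  define n where "n = grid_count \<Delta> \<alpha> w"
  define L where "L = q0 mod int m"
  have m: "0 < m"
    using j by simp
  have q0: "q0 = L + int m * (q0 div int m)"
    by (simp add: L_def)
  have shift: "real j * \<Delta> - 2 * pi * of_int k = of_int (int j - int m * k) * \<Delta>" for k
    using \<Delta>(2) by (simp add: algebra_simps flip: \<Delta>(2))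
  have "periodic_arc \<alpha> w (real j * \<Delta>) \<longleftrightarrow> (\<exists>k. q0 \<le> int j - int m * k \<and> int j - int m * k < q0 + n)"
    unfolding periodic_arc_def q0_def n_def
    by (simp only: grid_point_in_interval_iff[OF \<Delta>(1), symmetric] shift[symmetric]) (simp add: algebra_simps)
  also have "\<dots> \<longleftrightarrow> (\<exists>k. L \<le> int j - int m * k \<and> int j - int m * k < L + n)"
  proof
    assume "\<exists>k. q0 \<le> int j - int m * k \<and> int j - int m * k < q0 + n"
    then obtain k where "q0 \<le> int j - int m * k" "int j - int m * k < q0 + n"
      by blast
    then show "\<exists>k. L \<le> int j - int m * k \<and> int j - int m * k < L + n"
      by (intro exI[of _ "k + q0 div int m"]) (subst (asm) (1 2) q0; simp add: algebra_simps)
  next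
    assume "\<exists>k. L \<le> int j - int m * k \<and> int j - int m * k < L + n"
    then obtain k where "L \<le> int j - int m * k" "int j - int m * k < L + n"
      by blast
    then show "\<exists>k. q0 \<le> int j - int m * k \<and> int j - int m * k < q0 + n"
      by (intro exI[of _ "k - q0 div int m"]) (subst (1 2) q0; simp add: algebra_simps)
  qed
  also have "\<dots> \<longleftrightarrow> (L \<le> int j \<and> int j < L + n) \<or> int j + int m < L + n"
    using j m n by (intro cyclic_arc_int) (simp_all add: L_def n_def)
  also have "\<dots> \<longleftrightarrow> in_cyclic_arc m (nat L) (nat n) j"
  proof -
    have "0 \<le> L" "0 \<le> n"
      using m n by (simp_all add: L_def n_def)
    then show ?thesis
      by (simp add: in_cyclic_arc_def nat_le_iff zless_nat_eq_int_zless flip: nat_add_distrib)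
  qed
  finally show ?thesis
    by (simp add: q0_def L_def n_def)
qed

lemma grid_first_reduced:
  fixes \<Delta> \<alpha> w :: real and m :: nat
  assumes \<Delta>: "0 < \<Delta>" "real m * \<Delta> = 2 * pi" and m: "0 < m"
  defines "L \<equiv> nat (grid_first \<Delta> \<alpha> mod int m)"
    and "\<beta> \<equiv> \<alpha> - 2 * pi * of_int (grid_first \<Delta> \<alpha> div int m)"
  shows "L < m" "real L * \<Delta> < 2 * pi"
    and "\<beta> \<le> real L * \<Delta>" "real L * \<Delta> < \<beta> + \<Delta>"
    and "\<beta> + w < real L * \<Delta> + grid_count \<Delta> \<alpha> w * \<Delta>"
    and "real L * \<Delta> + grid_count \<Delta> \<alpha> w * \<Delta> \<le> \<beta> + w + \<Delta>"
proof -
  let ?q0 = "grid_first \<Delta> \<alpha>"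
  have "?q0 mod int m < int m" "0 \<le> ?q0 mod int m"
    using m by simp_all
  then show L: "L < m"
    unfolding L_def by (simp add: nat_less_iff)
  then show "real L * \<Delta> < 2 * pi"
    using \<Delta> by (simp flip: \<Delta>(2))
  have "real_of_int ?q0 = of_int (?q0 mod int m) + of_int (int m) * of_int (?q0 div int m)"
    by (simp only: of_int_add[symmetric] of_int_mult[symmetric] mod_mult_div_eq)
  also have "of_int (?q0 mod int m) = real L"
    using \<open>0 \<le> ?q0 mod int m\<close> by (simp add: L_def)
  finally have "real_of_int ?q0 = real L + real m * of_int (?q0 div int m)"
    by simp
  then have "real L * \<Delta> = ?q0 * \<Delta> - real m * \<Delta> * of_int (?q0 div int m)"
    by (simp add: algebra_simps)
  then have "real L * \<Delta> = ?q0 * \<Delta> - \<alpha> + \<beta>"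
    unfolding \<beta>_def \<Delta>(2) by simp
  then show "\<beta> \<le> real L * \<Delta>" "real L * \<Delta> < \<beta> + \<Delta>"
    "\<beta> + w < real L * \<Delta> + grid_count \<Delta> \<alpha> w * \<Delta>"
    "real L * \<Delta> + grid_count \<Delta> \<alpha> w * \<Delta> \<le> \<beta> + w + \<Delta>"
    using grid_first_bounds[OF \<Delta>(1), of \<alpha>] grid_end_bounds[OF \<Delta>(1), of \<alpha> w] by (simp_all add: algebra_simps)
qed

lemma width_in_grid_units:
  fixes K d :: nat and wl wh w :: real
  assumes K: "6 * pi \<le> real K * wl" "6 * pi \<le> real K * (2 * pi - wh)" and w: "wl \<le> w" "w \<le> wh"
  shows "3 * real d \<le> w / (2 * pi / real (K * d))" "w / (2 * pi / real (K * d)) \<le> real (K * d) - 3 * real d"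
proof -
  have "6 * pi * real d \<le> real K * w * real d"
    using K(1) w(1) order_trans[OF K(1) mult_left_mono[OF w(1)]] by (intro mult_right_mono) auto
  then show "3 * real d \<le> w / (2 * pi / real (K * d))"
    by (simp add: field_simps)
  have "6 * pi * real d \<le> real K * (2 * pi - w) * real d"
    using order_trans[OF K(2) mult_left_mono[of "2 * pi - wh" "2 * pi - w"]] w(2) by (intro mult_right_mono) auto
  then show "w / (2 * pi / real (K * d)) \<le> real (K * d) - 3 * real d"
    by (simp add: field_simps)
qed

lemma samples_bump:
  assumes \<Delta>: "0 < \<Delta>" "real m * \<Delta> = 2 * pi" and n: "0 \<le> grid_count \<Delta> \<alpha> w" "grid_count \<Delta> \<alpha> w \<le> int m"
    and \<alpha>: "\<alpha> = \<xi> + a * T - w / 2"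
  shows "map (bump h w \<xi>) (map (\<lambda>j. - (a * T) + 2 * pi * real j / real m) [0..<m])
    = map (\<lambda>j. if in_cyclic_arc m (nat (grid_first \<Delta> \<alpha> mod int m)) (nat (grid_count \<Delta> \<alpha> w)) j then h else 0)
        [0..<m]"
  unfolding map_map
proof (rule map_cong[OF refl])
  fix j assume "j \<in> set [0..<m]"
  then have j: "j < m"
    by simp
  then have "periodic_arc \<alpha> w (real j * \<Delta>)
      \<longleftrightarrow> in_cyclic_arc m (nat (grid_first \<Delta> \<alpha> mod int m)) (nat (grid_count \<Delta> \<alpha> w)) j"
    using periodic_arc_grid_point[OF \<Delta>] n by simp
  moreover have "- (a * T) + 2 * pi * real j / real m = real j * \<Delta> - a * T"
    using j by (simp flip: \<Delta>(2))
  ultimately show "(bump h w \<xi> \<circ> (\<lambda>j. - (a * T) + 2 * pi * real j / real m)) j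
      = (if in_cyclic_arc m (nat (grid_first \<Delta> \<alpha> mod int m)) (nat (grid_count \<Delta> \<alpha> w)) j then h else 0)"
    using G_adv_bump[of a T h w \<xi> "real j * \<Delta>"] by (simp add: G_adv_def \<alpha>)
qed

lemma grid_count_range:
  assumes "0 < d" "3 * real d \<le> w / \<Delta>" "w / \<Delta> \<le> real m - 3 * real d" "0 < \<Delta>"
  shows "0 \<le> grid_count \<Delta> \<alpha> w" "grid_count \<Delta> \<alpha> w \<le> int m"
    and "2 * d \<le> nat (grid_count \<Delta> \<alpha> w)" "nat (grid_count \<Delta> \<alpha> w) + 2 * d \<le> m"
proof -
  have "1 \<le> real d"
    using assms(1) by simp
  then have cnt: "2 * real d \<le> grid_count \<Delta> \<alpha> w" "grid_count \<Delta> \<alpha> w + 2 * real d \<le> real m"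
    using assms(2,3) grid_count_bounds[OF assms(4), where \<alpha>=\<alpha> and w=w] by linarith+
  then have "real_of_int 0 \<le> real_of_int (grid_count \<Delta> \<alpha> w)"
    and "real_of_int (grid_count \<Delta> \<alpha> w) \<le> real_of_int (int m)"
    by simp_all
  then show n: "0 \<le> grid_count \<Delta> \<alpha> w" "grid_count \<Delta> \<alpha> w \<le> int m"
    unfolding of_int_le_iff by simp_all
  then have "real (nat (grid_count \<Delta> \<alpha> w)) = grid_count \<Delta> \<alpha> w"
    by simp
  then show "2 * d \<le> nat (grid_count \<Delta> \<alpha> w)" "nat (grid_count \<Delta> \<alpha> w) + 2 * d \<le> m"
    using cnt by linarith+
qed

lemma sdon_error_bump:
  fixes K d :: nat and a T hl hh wl wh h w \<xi> :: real
  assumes hl: "0 < hl" "hl \<le> h" "h \<le> hh" and w: "wl \<le> w" "w \<le> wh" "wh < 2 * pi"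
    and K: "3 \<le> K" "6 * pi \<le> real K * wl" "6 * pi \<le> real K * (2 * pi - wh)" and d: "0 < d"
  defines "\<Delta> \<equiv> 2 * pi / real (K * d)"
  shows "L1T_dist (G_adv a T (bump h w \<xi>))
      (sdon_eval (map (\<lambda>j. - (a * T) + 2 * pi * real j / real (K * d)) [0..<K * d]) 8 (branch_net (K * d) \<Delta>)
         trunk_net (scale_net K d hl hh) (shift_net K d hl hh \<Delta> \<Delta>) (bump h w \<xi>))
    \<le> ennreal (40 * pi * h / real (K * d))"
proof -
  define \<alpha> where "\<alpha> = \<xi> + a * T - w / 2"
  define L where "L = nat (grid_first \<Delta> \<alpha> mod int (K * d))"
  define n where "n = nat (grid_count \<Delta> \<alpha> w)"
  define \<beta> where "\<beta> = \<alpha> - 2 * pi * of_int (grid_first \<Delta> \<alpha> div int (K * d))"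
  have m: "0 < K * d" and \<Delta>: "0 < \<Delta>" "real (K * d) * \<Delta> = 2 * pi"
    using K d by (simp_all add: \<Delta>_def)
  note units = width_in_grid_units[OF K(2,3) w(1,2), of d, folded \<Delta>_def]
  note n = grid_count_range[OF d units \<Delta>(1), where \<alpha>=\<alpha>, folded n_def]
  note reduced = grid_first_reduced(1-4)[OF \<Delta> m, where \<alpha>=\<alpha>, folded L_def \<beta>_def]
    grid_first_reduced(5,6)[OF \<Delta> m, where \<alpha>=\<alpha> and w=w, folded L_def \<beta>_def]
  interpret arc_blocks K d L n
    using K(1) d n reduced by unfold_locales simp_all
  have "1 \<le> real d"
    using d by simp
  then have "1 \<le> w / \<Delta>"
    using units by linarith
  then have "\<Delta> \<le> w"
    using \<Delta> by (simp add: le_divide_eq)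
  moreover have "G_adv a T (bump h w \<xi>) = (\<lambda>y. if periodic_arc \<beta> w y then h else 0)"
    by (simp add: fun_eq_iff G_adv_bump \<beta>_def \<alpha>_def periodic_arc_shift_period)
  moreover note samples = samples_bump[OF \<Delta> n(1,2) \<alpha>_def, of h, folded L_def n_def]
  ultimately have "L1T_dist (G_adv a T (bump h w \<xi>))
      (sdon_eval (map (\<lambda>j. - (a * T) + 2 * pi * real j / real (K * d)) [0..<K * d]) 8 (branch_net (K * d) \<Delta>)
         trunk_net (scale_net K d hl hh) (shift_net K d hl hh \<Delta> \<Delta>) (bump h w \<xi>))
      \<le> ennreal (10 * h * (\<Delta> + \<Delta>))"
    unfolding sdon_eval_arc[OF hl samples, abs_def]
    using L1T_dist_periodic_arc_soft[of h w \<Delta> \<Delta> \<beta> "real L * \<Delta>" "real L * \<Delta> + real n * \<Delta>"]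
      hl w \<Delta> reduced n(1) by (simp add: n_def)
  also have "10 * h * (\<Delta> + \<Delta>) = 40 * pi * h / real (K * d)"
    by (simp add: \<Delta>_def)
  finally show ?thesis .
qed

section \<open>Averaging over the input measure\<close>

lemma sets_unif [measurable_cong]: "sets (unif lo hi) = sets borel"
  by (simp add: unif_def)

lemma space_unif [simp]: "space (unif lo hi) = UNIV"
  by (simp add: unif_def)

lemma prob_space_unif: "lo \<le> hi \<Longrightarrow> prob_space (unif lo hi)"
  by (cases "lo < hi") (simp_all add: unif_def prob_space_uniform_measure prob_space_return)

lemma AE_unif:
  assumes "lo \<le> hi"
  shows "AE x in unif lo hi. lo \<le> x \<and> x \<le> hi"
proof (cases "lo < hi")
  case True
  then show ?thesis
    unfolding unif_def by (auto intro!: AE_uniform_measureI)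
next
  case False
  then show ?thesis
    using assms unfolding unif_def by (simp add: AE_return)
qed

lemma AE_pair_fstI:
  assumes "pair_sigma_finite M1 M2" "Measurable.pred M1 Q" "AE x in M1. Q x"
  shows "AE z in M1 \<Otimes>\<^sub>M M2. Q (fst z)"
  by (rule pair_sigma_finite.AE_pair_measure[OF assms(1)]) (use assms(2,3) in auto)

lemma AE_pair_sndI:
  assumes "pair_sigma_finite M1 M2" "Measurable.pred M2 Q" "AE y in M2. Q y"
  shows "AE z in M1 \<Otimes>\<^sub>M M2. Q (snd z)"
  by (rule pair_sigma_finite.AE_pair_measure[OF assms(1)]) (use assms(2,3) in auto)

lemma pair_sigma_finite_prob: "prob_space M1 \<Longrightarrow> prob_space M2 \<Longrightarrow> pair_sigma_finite M1 M2"
  by (simp add: pair_sigma_finite_def prob_space_imp_sigma_finite)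

lemma mu_expect_le:
  assumes "hl \<le> hh" "wl \<le> wh" "0 \<le> \<epsilon>"
    and F: "\<And>h w \<xi>. hl \<le> h \<Longrightarrow> h \<le> hh \<Longrightarrow> wl \<le> w \<Longrightarrow> w \<le> wh \<Longrightarrow> F (bump h w \<xi>) \<le> ennreal \<epsilon>"
  shows "mu_expect hl hh wl wh F \<le> ennreal \<epsilon>"
proof -
  have P1: "prob_space (unif hl hh)" and P2: "prob_space (unif wl wh)" and P3: "prob_space (unif 0 (2 * pi))"
    using assms(1,2) by (simp_all add: prob_space_unif)
  have P23: "prob_space (unif wl wh \<Otimes>\<^sub>M unif 0 (2 * pi))"
    using P2 P3 by (rule prob_space_pair)
  have "AE q in unif wl wh \<Otimes>\<^sub>M unif 0 (2 * pi). wl \<le> fst q \<and> fst q \<le> wh"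
    using AE_unif[OF assms(2)] by (intro AE_pair_fstI pair_sigma_finite_prob P2 P3) auto
  then have "AE q in unif hl hh \<Otimes>\<^sub>M (unif wl wh \<Otimes>\<^sub>M unif 0 (2 * pi)).
      (hl \<le> fst q \<and> fst q \<le> hh) \<and> (wl \<le> fst (snd q) \<and> fst (snd q) \<le> wh)"
    using AE_unif[OF assms(1)] P1 P23
    by (intro AE_conjI AE_pair_fstI[where Q="\<lambda>h. hl \<le> h \<and> h \<le> hh"]
        AE_pair_sndI[where Q="\<lambda>q. wl \<le> fst q \<and> fst q \<le> wh"] pair_sigma_finite_prob) auto
  then have "mu_expect hl hh wl wh F \<le> (\<integral>\<^sup>+ q. ennreal \<epsilon> \<partial>(unif hl hh \<Otimes>\<^sub>M (unif wl wh \<Otimes>\<^sub>M unif 0 (2 * pi))))"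
    unfolding mu_expect_def by (rule nn_integral_mono_AE[OF AE_mp]) (auto intro: F)
  also have "\<dots> = ennreal \<epsilon>"
    using prob_space.emeasure_space_1[OF prob_space_pair[OF P1 P23]] by simp
  finally show ?thesis .
qed

section \<open>Choice of the parameters\<close>

lemma exists_block_number:
  assumes "0 < wl" "wh < 2 * pi"
  shows "\<exists>K::nat. 3 \<le> K \<and> 6 * pi \<le> real K * wl \<and> 6 * pi \<le> real K * (2 * pi - wh)"
proof (intro exI conjI)
  define K where "K = nat \<lceil>6 * pi / wl\<rceil> + nat \<lceil>6 * pi / (2 * pi - wh)\<rceil> + 3"
  show "3 \<le> K"
    by (simp add: K_def)
  have "6 * pi / wl \<le> real K" "6 * pi / (2 * pi - wh) \<le> real K"
    unfolding K_def using real_nat_ceiling_ge[of "6 * pi / wl"] real_nat_ceiling_ge[of "6 * pi / (2 * pi - wh)"]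
    by linarith+
  then show "6 * pi \<le> real K * wl" "6 * pi \<le> real K * (2 * pi - wh)"
    using assms by (simp_all add: divide_le_eq mult.commute)
qed

lemma exists_block_size:
  assumes "0 < c" "0 < \<epsilon>" "\<epsilon> \<le> 1" "0 < K"
  shows "\<exists>d::nat. 0 < d \<and> c / real (K * d) \<le> \<epsilon> \<and> real (K * d) \<le> real K * (c + 1) / \<epsilon>"
proof (intro exI conjI)
  define d where "d = nat \<lceil>c / \<epsilon>\<rceil>"
  have lower: "c / \<epsilon> \<le> real d" and "real d \<le> c / \<epsilon> + 1"
    using assms by (simp_all add: d_def of_nat_int_ceiling)
  moreover have "0 < c / \<epsilon>" "c / \<epsilon> + 1 \<le> (c + 1) / \<epsilon>"
    using assms by (simp_all add: add_divide_distrib le_divide_eq)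
  ultimately have d: "0 < real d" "real d \<le> (c + 1) / \<epsilon>"
    by linarith+
  have "c \<le> \<epsilon> * real d"
    using lower assms by (simp add: divide_le_eq mult.commute)
  show "0 < d"
    using d(1) by simp
  have "real d \<le> real K * real d"
    using assms(4) d(1) by simp
  then have "\<epsilon> * real d \<le> \<epsilon> * (real K * real d)"
    using assms(2) by (rule mult_left_mono[OF _ less_imp_le])
  then have "c \<le> \<epsilon> * real (K * d)"
    using \<open>c \<le> \<epsilon> * real d\<close> by simp
  then show "c / real (K * d) \<le> \<epsilon>"
    using assms(4) d(1) by (simp add: divide_le_eq mult.commute)
  have "real K * real d \<le> real K * ((c + 1) / \<epsilon>)"
    using d(2) by (intro mult_left_mono) auto
  then show "real (K * d) \<le> real K * (c + 1) / \<epsilon>"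
    by simp
qed

lemma ln_inverse_squared_ge:
  fixes \<epsilon> :: real
  assumes "0 < \<epsilon>" "\<epsilon> \<le> 1 / 2"
  shows "1 / 4 \<le> (ln (1 / \<epsilon>))^2"
proof -
  have "1 / 2 \<le> ln (1 / \<epsilon>)"
    using ln_le_minus_one[OF assms(1)] assms by (simp add: ln_div)
  then have "(1 / 2)^2 \<le> (ln (1 / \<epsilon>))^2"
    by (intro power_mono) auto
  then show ?thesis
    by (simp add: power2_eq_square)
qed

lemma size_formula_le_div:
  fixes m w :: nat and B W \<epsilon> :: real
  assumes "0 < \<epsilon>" "\<epsilon> \<le> 1" "real m \<le> B / \<epsilon>" "real w \<le> W"
  shows "real ((m + 8) * w + w^2 * 4) \<le> ((B + 8) * W + 4 * W^2) / \<epsilon>"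
proof -
  have "1 \<le> 1 / \<epsilon>"
    using assms by simp
  then have "8 * 1 \<le> 8 * (1 / \<epsilon>)" "W^2 * 1 \<le> W^2 * (1 / \<epsilon>)"
    by (intro mult_left_mono; simp)+
  then have "real m + 8 \<le> B / \<epsilon> + 8 / \<epsilon>" and W2: "W^2 \<le> W^2 / \<epsilon>"
    using assms(3) by simp_all
  then have first: "(real m + 8) * real w \<le> (B / \<epsilon> + 8 / \<epsilon>) * W"
    using assms(4) by (intro mult_mono) auto
  have "real w ^ 2 \<le> W^2"
    using assms(4) by (intro power_mono) auto
  then have second: "real w ^ 2 * 4 \<le> 4 * (W^2 / \<epsilon>)"
    using W2 by simp
  have "((B + 8) * W + 4 * W^2) / \<epsilon> = (B / \<epsilon> + 8 / \<epsilon>) * W + 4 * (W^2 / \<epsilon>)"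
    by (simp add: add_divide_distrib distrib_right)
  then show ?thesis
    using add_mono[OF first second] by simp
qed

lemma mu_expect_sdon_construction:
  fixes K d :: nat and a T hl hh wl wh :: real
  assumes hl: "0 < hl" "hl \<le> hh" and w: "wl \<le> wh" "wh < 2 * pi"
    and K: "3 \<le> K" "6 * pi \<le> real K * wl" "6 * pi \<le> real K * (2 * pi - wh)" and d: "0 < d"
  defines "\<Delta> \<equiv> 2 * pi / real (K * d)"
  shows "mu_expect hl hh wl wh (\<lambda>u. L1T_dist (G_adv a T u)
      (sdon_eval (map (\<lambda>j. - (a * T) + 2 * pi * real j / real (K * d)) [0..<K * d]) 8 (branch_net (K * d) \<Delta>)
        trunk_net (scale_net K d hl hh) (shift_net K d hl hh \<Delta> \<Delta>) u))
    \<le> ennreal (40 * pi * hh / real (K * d))"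
proof (rule mu_expect_le)
  fix h w \<xi> assume hw: "hl \<le> h" "h \<le> hh" "wl \<le> w" "w \<le> wh"
  have "L1T_dist (G_adv a T (bump h w \<xi>))
      (sdon_eval (map (\<lambda>j. - (a * T) + 2 * pi * real j / real (K * d)) [0..<K * d]) 8 (branch_net (K * d) \<Delta>)
        trunk_net (scale_net K d hl hh) (shift_net K d hl hh \<Delta> \<Delta>) (bump h w \<xi>))
      \<le> ennreal (40 * pi * h / real (K * d))"
    unfolding \<Delta>_def by (rule sdon_error_bump[OF hl(1) hw w(2) K d])
  also have "\<dots> \<le> ennreal (40 * pi * hh / real (K * d))"
    using hw(2) by (intro ennreal_leI divide_right_mono) auto
  finally show "L1T_dist (G_adv a T (bump h w \<xi>))
      (sdon_eval (map (\<lambda>j. - (a * T) + 2 * pi * real j / real (K * d)) [0..<K * d]) 8 (branch_net (K * d) \<Delta>)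
        trunk_net (scale_net K d hl hh) (shift_net K d hl hh \<Delta> \<Delta>) (bump h w \<xi>))
      \<le> ennreal (40 * pi * hh / real (K * d))" .
qed (use hl w in auto)

lemma sdon_advection_rate:
  fixes K :: nat and a T hl hh wl wh \<epsilon> C :: real
  assumes hl: "0 < hl" "hl \<le> hh" and w: "wl \<le> wh" "wh < 2 * pi"
    and K: "3 \<le> K" "6 * pi \<le> real K * wl" "6 * pi \<le> real K * (2 * pi - wh)"
    and \<epsilon>: "0 < \<epsilon>" "\<epsilon> \<le> 1/2"
    and C: "(real K * (40 * pi * hh + 1) + 8) * real (6 * K + 5) + 4 * real (6 * K + 5)^2 + 16 \<le> C"
  shows "\<exists>m p (x0::real) B Tr A G.
              sdon_wf m p B Tr A G \<and>
              real p \<le> C \<and> real m \<le> C / \<epsilon> \<and>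
              mu_expect hl hh wl wh
                (\<lambda>u. L1T_dist (G_adv a T u)
                       (sdon_eval (map (\<lambda>j. x0 + 2 * pi * real j / real m) [0..<m]) p B Tr A G u))
                \<le> ennreal \<epsilon> \<and>
              real (sdon_width B Tr A G) \<le> C \<and>
              real (sdon_depth B Tr A G) \<le> C * (ln (1 / \<epsilon>))^2 \<and>
              real (sdon_size m p B Tr A G) \<le> C / \<epsilon>"
proof -
  define W where "W = real (6 * K + 5)"
  define B where "B = real K * (40 * pi * hh + 1)"
  obtain d :: nat where d: "0 < d" "40 * pi * hh / real (K * d) \<le> \<epsilon>" and m: "real (K * d) \<le> B / \<epsilon>"
    using exists_block_size[of "40 * pi * hh" \<epsilon> K] \<epsilon> hl K(1) unfolding B_def by auto
  define \<Delta> where "\<Delta> = 2 * pi / real (K * d)"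
  have "0 \<le> B" "1 \<le> W"
    using hl by (simp_all add: B_def W_def)
  then have "B + 8 \<le> (B + 8) * W" "8 * W \<le> (B + 8) * W"
    using mult_left_mono[of 1 W "B + 8"] by (auto intro: mult_right_mono)
  then have C_ge: "16 \<le> C" "B \<le> C" "W \<le> C" "(B + 8) * W + 4 * W^2 \<le> C"
    using C \<open>1 \<le> W\<close> zero_le_power2[of W] unfolding B_def[symmetric] W_def[symmetric] by linarith+
  have "B / \<epsilon> \<le> C / \<epsilon>"
    using C_ge \<epsilon> by (intro divide_right_mono) auto
  with m have m_le: "real (K * d) \<le> C / \<epsilon>"
    by linarith
  have err: "mu_expect hl hh wl wh (\<lambda>u. L1T_dist (G_adv a T u)
      (sdon_eval (map (\<lambda>j. - (a * T) + 2 * pi * real j / real (K * d)) [0..<K * d]) 8 (branch_net (K * d) \<Delta>)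
        trunk_net (scale_net K d hl hh) (shift_net K d hl hh \<Delta> \<Delta>) u)) \<le> ennreal \<epsilon>"
    unfolding \<Delta>_def using mu_expect_sdon_construction[OF hl w K d(1), of a T] d(2) order_trans ennreal_leI
    by blast
  have width: "real (sdon_width (branch_net (K * d) \<Delta>) trunk_net (scale_net K d hl hh) (shift_net K d hl hh \<Delta> \<Delta>)) \<le> W"
    using sdon_width_construction unfolding W_def of_nat_le_iff .
  have depth: "real (sdon_depth (branch_net (K * d) \<Delta>) trunk_net (scale_net K d hl hh) (shift_net K d hl hh \<Delta> \<Delta>))
      \<le> C * (ln (1 / \<epsilon>))^2"
    using C_ge ln_inverse_squared_ge[OF \<epsilon>] mult_mono[of 16 C "1/4" "(ln (1 / \<epsilon>))^2"]
    by (simp add: sdon_depth_construction)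
  have "real (sdon_size (K * d) 8 (branch_net (K * d) \<Delta>) trunk_net (scale_net K d hl hh) (shift_net K d hl hh \<Delta> \<Delta>))
      \<le> ((B + 8) * W + 4 * W^2) / \<epsilon>"
    unfolding sdon_size_def sdon_depth_construction by (rule size_formula_le_div[OF _ _ m width]) (use \<epsilon> in auto)
  also have "\<dots> \<le> C / \<epsilon>"
    using C_ge \<epsilon> by (intro divide_right_mono) auto
  finally show ?thesis
    using sdon_wf_construction C_ge m_le err width depth by (intro exI conjI) (fastforce+)
qed

theorem theorem3p2:
  fixes a T hl hh wl wh :: real
  assumes "T > 0" and "0 < hl" and "hl \<le> hh" and "0 < wl" and "wl \<le> wh" and "wh < 2 * pi"
  shows "\<exists>C>0. \<forall>\<epsilon>::real. 0 < \<epsilon> \<and> \<epsilon> \<le> 1/2 \<longrightarrow>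
           (\<exists>m p (x0::real) B Tr A G.
              sdon_wf m p B Tr A G \<and>
              real p \<le> C \<and> real m \<le> C / \<epsilon> \<and>
              mu_expect hl hh wl wh
                (\<lambda>u. L1T_dist (G_adv a T u)
                       (sdon_eval (map (\<lambda>j. x0 + 2 * pi * real j / real m) [0..<m]) p B Tr A G u))
                \<le> ennreal \<epsilon> \<and>
              real (sdon_width B Tr A G) \<le> C \<and>
              real (sdon_depth B Tr A G) \<le> C * (ln (1 / \<epsilon>))^2 \<and>
              real (sdon_size m p B Tr A G) \<le> C / \<epsilon>)"
proof -
  obtain K :: nat where K: "3 \<le> K" "6 * pi \<le> real K * wl" "6 * pi \<le> real K * (2 * pi - wh)"
    using exists_block_number assms(4,6) by blast
  define C where "C = (real K * (40 * pi * hh + 1) + 8) * real (6 * K + 5) + 4 * real (6 * K + 5)^2 + 16"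
  have "0 < C"
    using assms(2,3) unfolding C_def by (intro add_nonneg_pos add_nonneg_nonneg mult_nonneg_nonneg) auto
  moreover have "(real K * (40 * pi * hh + 1) + 8) * real (6 * K + 5) + 4 * real (6 * K + 5)^2 + 16 \<le> C"
    by (simp add: C_def)
  ultimately show ?thesis
    using sdon_advection_rate[OF assms(2,3,5,6) K] by blast
qed

end
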